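(* Let $\Lambda$ be the preprojective algebra of a finite graph $\Gamma$ without loops, and let $q=\bigoplus_{i\in I} q_i^{\oplus a_i}$ with nonnegative integers $a_i$. Let $x$ be a finite-dimensional $\Lambda$-module isomorphic to a submodule of $q$. If $f_1:x\to q$ and $f_2:x\to q$ are two monomorphisms of $\Lambda$-modules, then there exists an automorphism $g:q\to q$ of $\Lambda$-modules such that $f_2=g f_1$.
   Context: $\Gamma$ is a finite unoriented graph without loops (multiple edges allowed) with vertex set $I$; $\Lambda$ is its preprojective algebra over $\mathbb{C}$ (in the sense of Gelfand–Ponomarev). For $i\in I$, $s_i$ is the one-dimensional simple $\Lambda$-module at vertex $i$ and $q_i$ is its injective hull. *)

theory Defs
  imports Complex_Main "HOL-Library.Function_Algebras"
begin

text \<open>A finite graph without loops (multiple edges allowed) with vertex type 'i is encoded,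
as in Lusztig, by a finite set H (of elements of type 'h) of oriented edges of its double quiver, with source
and target maps, a fixed-point-free involution h to bar h reversing arrows, and an orientation
sign eps with eps (bar h) = - eps h.\<close>

type_synonym ('i,'h) graph = "'h set \<times> ('h \<Rightarrow> 'i) \<times> ('h \<Rightarrow> 'i) \<times> ('h \<Rightarrow> 'h) \<times> ('h \<Rightarrow> complex)"

definition garr :: "('i,'h) graph \<Rightarrow> 'h set" where "garr G = fst G"
definition gsrc :: "('i,'h) graph \<Rightarrow> 'h \<Rightarrow> 'i" where "gsrc G = fst (snd G)"
definition gtgt :: "('i,'h) graph \<Rightarrow> 'h \<Rightarrow> 'i" where "gtgt G = fst (snd (snd G))"
definition gbar :: "('i,'h) graph \<Rightarrow> 'h \<Rightarrow> 'h" where "gbar G = fst (snd (snd (snd G)))"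
definition geps :: "('i,'h) graph \<Rightarrow> 'h \<Rightarrow> complex" where "geps G = snd (snd (snd (snd G)))"

definition double_graph :: "('i::finite,'h) graph \<Rightarrow> bool" where
  "double_graph G \<longleftrightarrow> finite (garr G) \<and>
     (\<forall>h\<in>garr G. gbar G h \<in> garr G \<and> gbar G (gbar G h) = h \<and> gbar G h \<noteq> h \<and>
          gsrc G (gbar G h) = gtgt G h \<and> gsrc G h \<noteq> gtgt G h \<and>
          (geps G h = 1 \<or> geps G h = -1) \<and> geps G (gbar G h) = - geps G h)"

text \<open>A module: a C-vector space structure (scalar multiplication sc on the abelian group 'v),
a family of subspaces V i (the spaces e_i M; the module is their external direct sum) and
maps X h : V (src h) \<rightarrow> V (tgt h) satisfying the preprojective relations.\<close>

type_synonym ('i,'h,'v) rep = "(complex \<Rightarrow> 'v \<Rightarrow> 'v) \<times> ('i \<Rightarrow> 'v set) \<times> ('h \<Rightarrow> 'v \<Rightarrow> 'v)"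

definition rsc :: "('i,'h,'v) rep \<Rightarrow> complex \<Rightarrow> 'v \<Rightarrow> 'v" where "rsc M = fst M"
definition rsp :: "('i,'h,'v) rep \<Rightarrow> 'i \<Rightarrow> 'v set" where "rsp M = fst (snd M)"
definition rmap :: "('i,'h,'v) rep \<Rightarrow> 'h \<Rightarrow> 'v \<Rightarrow> 'v" where "rmap M = snd (snd M)"

definition lin_on :: "(complex \<Rightarrow> 'v \<Rightarrow> 'v) \<Rightarrow> (complex \<Rightarrow> 'w \<Rightarrow> 'w) \<Rightarrow> 'v set
    \<Rightarrow> ('v::ab_group_add \<Rightarrow> 'w::ab_group_add) \<Rightarrow> bool" where
  "lin_on s t S f \<longleftrightarrow> (\<forall>a\<in>S. \<forall>b\<in>S. f (a + b) = f a + f b) \<and> (\<forall>c. \<forall>a\<in>S. f (s c a) = t c (f a))"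

definition is_module :: "('i::finite,'h) graph \<Rightarrow> ('i,'h,'v::ab_group_add) rep \<Rightarrow> bool" where
  "is_module G M \<longleftrightarrow>
     vector_space (rsc M) \<and>
     (\<forall>i. module.subspace (rsc M) (rsp M i)) \<and>
     (\<forall>h\<in>garr G. rmap M h ` rsp M (gsrc G h) \<subseteq> rsp M (gtgt G h) \<and>
          lin_on (rsc M) (rsc M) (rsp M (gsrc G h)) (rmap M h)) \<and>
     (\<forall>i. \<forall>v\<in>rsp M i.
          (\<Sum>h\<in>{h\<in>garr G. gtgt G h = i}. rsc M (geps G h) (rmap M h (rmap M (gbar G h) v))) = 0)"

definition findim_module :: "('i::finite,'h,'v::ab_group_add) rep \<Rightarrow> bool" where
  "findim_module M \<longleftrightarrow> (\<forall>i. \<exists>B. finite B \<and> B \<subseteq> rsp M i \<and> module.span (rsc M) B = rsp M i)"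

definition is_hom :: "('i::finite,'h) graph \<Rightarrow> ('i,'h,'v::ab_group_add) rep
    \<Rightarrow> ('i,'h,'w::ab_group_add) rep \<Rightarrow> ('i \<Rightarrow> 'v \<Rightarrow> 'w) \<Rightarrow> bool" where
  "is_hom G M N f \<longleftrightarrow>
     (\<forall>i. lin_on (rsc M) (rsc N) (rsp M i) (f i) \<and> f i ` rsp M i \<subseteq> rsp N i) \<and>
     (\<forall>h\<in>garr G. \<forall>v\<in>rsp M (gsrc G h). f (gtgt G h) (rmap M h v) = rmap N h (f (gsrc G h) v))"

definition is_mono :: "('i::finite,'h) graph \<Rightarrow> ('i,'h,'v::ab_group_add) rep
    \<Rightarrow> ('i,'h,'w::ab_group_add) rep \<Rightarrow> ('i \<Rightarrow> 'v \<Rightarrow> 'w) \<Rightarrow> bool" where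
  "is_mono G M N f \<longleftrightarrow> is_hom G M N f \<and> (\<forall>i. inj_on (f i) (rsp M i))"

definition is_iso :: "('i::finite,'h) graph \<Rightarrow> ('i,'h,'v::ab_group_add) rep
    \<Rightarrow> ('i,'h,'w::ab_group_add) rep \<Rightarrow> ('i \<Rightarrow> 'v \<Rightarrow> 'w) \<Rightarrow> bool" where
  "is_iso G M N f \<longleftrightarrow> is_hom G M N f \<and> (\<forall>i. bij_betw (f i) (rsp M i) (rsp N i))"

definition is_submodule :: "('i::finite,'h) graph \<Rightarrow> ('i,'h,'v::ab_group_add) rep
    \<Rightarrow> ('i \<Rightarrow> 'v set) \<Rightarrow> bool" where
  "is_submodule G M U \<longleftrightarrow>
     (\<forall>i. module.subspace (rsc M) (U i) \<and> U i \<subseteq> rsp M i) \<and>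
     (\<forall>h\<in>garr G. rmap M h ` U (gsrc G h) \<subseteq> U (gtgt G h))"

definition simple_mod :: "'i \<Rightarrow> ('i,'h,complex) rep" where
  "simple_mod i = ((*), (\<lambda>j. if j = i then UNIV else {0}), (\<lambda>h v. 0))"

text \<open>Injectivity in the category of all Lambda-modules.  Test modules are taken with underlying
spaces inside the C-vector space nat \<Rightarrow> complex (of uncountable dimension); since Lambda has
countable dimension, by Baer's criterion this is the same as injectivity against all modules.\<close>

definition fun_sc :: "complex \<Rightarrow> (nat \<Rightarrow> complex) \<Rightarrow> (nat \<Rightarrow> complex)" where
  "fun_sc c f = (\<lambda>n. c * f n)"

definition is_injective :: "('i::finite,'h) graph \<Rightarrow> ('i,'h,'v::ab_group_add) rep \<Rightarrow> bool" where
  "is_injective G E \<longleftrightarrow>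
     (\<forall>(M :: ('i,'h,nat \<Rightarrow> complex) rep) (N :: ('i,'h,nat \<Rightarrow> complex) rep) u \<phi>.
        rsc M = fun_sc \<longrightarrow> rsc N = fun_sc \<longrightarrow> is_module G M \<longrightarrow> is_module G N \<longrightarrow>
        is_mono G M N u \<longrightarrow> is_hom G M E \<phi> \<longrightarrow>
        (\<exists>\<psi>. is_hom G N E \<psi> \<and> (\<forall>i. \<forall>v\<in>rsp M i. \<psi> i (u i v) = \<phi> i v)))"

definition is_injective_hull :: "('i::finite,'h) graph \<Rightarrow> ('i,'h,'w::ab_group_add) rep
    \<Rightarrow> ('i,'h,'v::ab_group_add) rep \<Rightarrow> ('i \<Rightarrow> 'w \<Rightarrow> 'v) \<Rightarrow> bool" where
  "is_injective_hull G S E \<iota> \<longleftrightarrow>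
     is_module G E \<and> is_injective G E \<and> is_mono G S E \<iota> \<and>
     (\<forall>U. is_submodule G E U \<longrightarrow> (\<exists>i. U i \<noteq> {0}) \<longrightarrow>
          (\<exists>i. \<exists>v\<in>U i. v \<noteq> 0 \<and> v \<in> \<iota> i ` rsp S i))"

text \<open>The direct sum of a_i copies of Q_i over all vertices i.  An element at vertex j is a
function on pairs (i,k) with k < a i, value in (Q i) at j, and zero elsewhere.\<close>

definition dsum_mod :: "('i \<Rightarrow> ('i,'h,'q::ab_group_add) rep) \<Rightarrow> ('i \<Rightarrow> nat)
    \<Rightarrow> ('i,'h,'i \<times> nat \<Rightarrow> 'q) rep" where
  "dsum_mod Q a =
     ((\<lambda>c \<phi> p. rsc (Q (fst p)) c (\<phi> p)),
      (\<lambda>j. {\<phi>. \<forall>p. (snd p < a (fst p) \<longrightarrow> \<phi> p \<in> rsp (Q (fst p)) j) \<and>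
                      (\<not> snd p < a (fst p) \<longrightarrow> \<phi> p = 0)}),
      (\<lambda>h \<phi> p. if snd p < a (fst p) then rmap (Q (fst p)) h (\<phi> p) else 0))"

end

theory Submission
  imports Defs "HOL-Library.Countable_Set"
begin

text \<open>
  Let \<open>S\<close> be the socle of \<open>q\<close>, i.e. the vectors annihilated by all arrows. As \<open>q\<^sub>i\<close> is an
  injective hull of \<open>s\<^sub>i\<close>, \<open>S\<close> is finite dimensional (spanned by the copies of \<open>s\<^sub>i\<close>)
  and meets every nonzero submodule of \<open>q\<close>.

  The isomorphism \<open>\<theta> = f\<^sub>2 f\<^sub>1\<^sup>-\<^sup>1 : f\<^sub>1(x) \<rightarrow> f\<^sub>2(x)\<close> maps \<open>f\<^sub>1(x) \<inter> S\<close> onto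
  \<open>f\<^sub>2(x) \<inter> S\<close>; extend it by linear algebra to an automorphism \<open>\<tau>\<close> of \<open>S\<close>, which is
  \<open>\<Lambda>\<close>-linear because all arrows vanish on \<open>S\<close>. Then \<open>\<theta>\<close> and \<open>\<tau>\<close> glue to a homomorphism on
  \<open>f\<^sub>1(x) + S\<close>, which extends to \<open>g : q \<rightarrow> q\<close> since \<open>q\<close> is injective. The kernel of \<open>g\<close>
  meets \<open>S\<close> trivially because \<open>g = \<tau>\<close> there, so it is zero; the same argument applied to a
  left inverse of \<open>g\<close> shows that \<open>g\<close> is onto.
\<close>

section \<open>Linear algebra\<close>

lemma lin_on_zero:
  assumes "vector_space s" "module.subspace s S" "lin_on s t S f"
  shows "f 0 = 0"
proof -
  interpret vector_space s by fact
  have "0 \<in> S" using subspace_0[OF assms(2)] .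
  then have "f (0 + 0) = f 0 + f 0" using assms(3) unfolding lin_on_def by blast
  then show ?thesis by simp
qed

lemma lin_on_diff:
  assumes "vector_space s" "module.subspace s S" "lin_on s t S f" "x \<in> S" "y \<in> S"
  shows "f (x - y) = f x - f y"
proof -
  interpret vector_space s by fact
  have "x - y \<in> S" using assms(2,4,5) subspace_diff by blast
  then have "f (x - y + y) = f (x - y) + f y" using assms(3,5) unfolding lin_on_def by blast
  then show ?thesis by (simp add: eq_diff_eq)
qed

lemma lin_on_subset: "lin_on s t S f \<Longrightarrow> T \<subseteq> S \<Longrightarrow> lin_on s t T f"
  unfolding lin_on_def by blast

lemma linear_imp_lin_on: "Vector_Spaces.linear s t f \<Longrightarrow> lin_on s t S f"
  unfolding lin_on_def Vector_Spaces.linear_iff by blast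

lemma inj_on_if_lin_on_kernel_trivial:
  assumes "vector_space s" "module.subspace s S" "lin_on s t S f"
    and "\<And>x. x \<in> S \<Longrightarrow> f x = 0 \<Longrightarrow> x = 0"
  shows "inj_on f S"
proof (rule inj_onI)
  interpret vector_space s by fact
  fix x y assume "x \<in> S" "y \<in> S" "f x = f y"
  then have "f (x - y) = 0" "x - y \<in> S"
    using lin_on_diff[OF assms(1-3)] assms(2) subspace_diff by auto
  then show "x = y" using assms(4)[of "x - y"] by simp
qed

lemma bij_betw_extend_same_card:
  assumes "finite B1" "finite B2" "B \<subseteq> B1" "C \<subseteq> B2" "bij_betw g B C" "card B1 = card B2"
  obtains t where "bij_betw t B1 B2" "\<And>b. b \<in> B \<Longrightarrow> t b = g b"
proof -
  have "card C = card B" using bij_betw_same_card[OF assms(5)] by simp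
  then have "card (B1 - B) = card (B2 - C)"
    using assms by (simp add: card_Diff_subset finite_subset)
  then obtain \<beta> where \<beta>: "bij_betw \<beta> (B1 - B) (B2 - C)"
    using finite_same_card_bij assms(1,2) by blast
  define t where "t b = (if b \<in> B then g b else \<beta> b)" for b
  have "bij_betw t B C" using assms(5) by (rule bij_betw_cong[THEN iffD1, rotated]) (simp add: t_def)
  moreover have "bij_betw t (B1 - B) (B2 - C)" using \<beta> by (rule bij_betw_cong[THEN iffD1, rotated]) (simp add: t_def)
  ultimately have "bij_betw t (B \<union> (B1 - B)) (C \<union> (B2 - C))" by (rule bij_betw_combine) blast
  moreover have "B \<union> (B1 - B) = B1" "C \<union> (B2 - C) = B2" using assms(3,4) by auto
  ultimately show ?thesis using that by (simp add: t_def)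
qed

lemma lin_on_eq_on_span:
  assumes vs: "vector_space s" and A: "module.subspace s A" "B \<subseteq> A"
    and f: "lin_on s t A f" and g: "lin_on s t A g"
    and eq: "\<And>b. b \<in> B \<Longrightarrow> f b = g b" and x: "x \<in> module.span s B"
  shows "f x = g x"
proof -
  interpret vector_space s by fact
  have "subspace {x \<in> A. f x = g x}"
  proof (rule subspaceI)
    show "0 \<in> {x \<in> A. f x = g x}"
      using subspace_0[OF A(1)] lin_on_zero[OF vs A(1) f] lin_on_zero[OF vs A(1) g] by simp
  qed (use f g subspace_add[OF A(1)] subspace_scale[OF A(1)] in \<open>auto simp: lin_on_def\<close>)
  then show ?thesis using span_induct[OF x, of "\<lambda>x. x \<in> A \<and> f x = g x"] A(2) eq by auto
qed

lemma lin_on_extends_to_linear: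
  assumes vs: "vector_space s" "vector_space t" and A: "module.subspace s A" and \<theta>: "lin_on s t A \<theta>"
  obtains g where "Vector_Spaces.linear s t g" "\<And>x. x \<in> A \<Longrightarrow> g x = \<theta> x"
proof -
  interpret vector_space s by (rule vs(1))
  interpret P: vector_space_pair s t by (intro vector_space_pair.intro vs)
  obtain B where B: "B \<subseteq> A" "independent B" "A \<subseteq> span B"
    using maximal_independent_subset[of A] by blast
  define g where "g = P.construct B \<theta>"
  have g: "Vector_Spaces.linear s t g" unfolding g_def by (rule P.linear_construct[OF B(2)])
  have g_B: "g b = \<theta> b" if "b \<in> B" for b unfolding g_def by (rule P.construct_basis[OF B(2) that])
  have "g x = \<theta> x" if x: "x \<in> A" for x
    using lin_on_eq_on_span[OF vs(1) A B(1) linear_imp_lin_on[OF g] \<theta> g_B] x B(3) by blast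
  then show ?thesis using that g by blast
qed

text \<open>Extend \<open>B\<close> and \<open>g B\<close> to bases of \<open>V\<close> (of equal size) and map one onto the other.\<close>

lemma linear_extends_to_automorphism:
  assumes vs: "vector_space s"
    and V: "module.subspace s V" "finite T" "V \<subseteq> module.span s T"
    and B: "B \<subseteq> V" "module.independent s B"
    and g: "Vector_Spaces.linear s s g" "inj_on g (module.span s B)" "g ` B \<subseteq> V"
  obtains \<tau> where "Vector_Spaces.linear s s \<tau>" "bij_betw \<tau> V V" "\<And>x. x \<in> module.span s B \<Longrightarrow> \<tau> x = g x"
proof -
  interpret vector_space s by (rule vs)
  interpret P: vector_space_pair s s ..
  obtain B1 where B1: "B \<subseteq> B1" "B1 \<subseteq> V" "independent B1" "V \<subseteq> span B1"
    using maximal_independent_subset_extend[OF B] by blast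
  obtain B2 where B2: "g ` B \<subseteq> B2" "B2 \<subseteq> V" "independent B2" "V \<subseteq> span B2"
    using maximal_independent_subset_extend[OF g(3) P.linear_independent_injective_image[OF g(1) B(2) g(2)]]
    by blast
  have "B1 \<subseteq> span T" "B2 \<subseteq> span T" using B1(2) B2(2) V(3) by auto
  then have fin: "finite B1" "finite B2"
    using independent_span_bound[OF V(2)] B1(3) B2(3) by blast+
  have "card B1 = card B2" using basis_card_eq_dim[OF B1(2,4,3)] basis_card_eq_dim[OF B2(2,4,3)] by simp
  moreover have "bij_betw g B (g ` B)"
    using inj_on_subset[OF g(2) span_superset] by (simp add: bij_betw_def)
  ultimately obtain t where t: "bij_betw t B1 B2" "\<And>b. b \<in> B \<Longrightarrow> t b = g b"
    using bij_betw_extend_same_card[OF fin B1(1) B2(1)] by blast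
  define \<tau> where "\<tau> = P.construct B1 t"
  have \<tau>: "Vector_Spaces.linear s s \<tau>" unfolding \<tau>_def by (rule P.linear_construct[OF B1(3)])
  have \<tau>_B1: "\<tau> b = t b" if "b \<in> B1" for b unfolding \<tau>_def by (rule P.construct_basis[OF B1(3) that])
  have "bij_betw \<tau> B1 B2" using t(1) bij_betw_cong[of B1 \<tau> t] \<tau>_B1 by simp
  then have img_B1: "\<tau> ` B1 = B2" and inj_B1: "inj_on \<tau> B1" by (simp_all add: bij_betw_def)
  have span_V: "span B1 = V" "span B2 = V" using span_subspace B1(2,4) B2(2,4) V(1) by auto
  have "inj_on \<tau> V"
    using P.linear_inj_on_span_iff_independent_image[OF \<tau>, of B1] img_B1 inj_B1 B2(3) span_V by simp
  moreover have "\<tau> ` V = V" using P.linear_span_image[OF \<tau>, of B1] img_B1 span_V by simp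
  moreover have "\<tau> x = g x" if x: "x \<in> span B" for x
    by (rule P.linear_eq_on[OF \<tau> g(1) x]) (use t(2) B1(1) \<tau>_B1 in auto)
  ultimately show ?thesis using that[OF \<tau>] by (simp add: bij_betw_def)
qed

lemma lin_inj_extends_to_automorphism:
  assumes vs: "vector_space s"
    and V: "module.subspace s V" "finite T" "V \<subseteq> module.span s T"
    and A: "module.subspace s A" "A \<subseteq> V"
    and \<theta>: "lin_on s s A \<theta>" "inj_on \<theta> A" "\<theta> ` A \<subseteq> V"
  obtains \<tau> where "lin_on s s V \<tau>" "bij_betw \<tau> V V" "\<And>x. x \<in> A \<Longrightarrow> \<tau> x = \<theta> x"
proof -
  interpret vector_space s by (rule vs)
  obtain g where g: "Vector_Spaces.linear s s g" "\<And>x. x \<in> A \<Longrightarrow> g x = \<theta> x"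
    using lin_on_extends_to_linear[OF vs vs A(1) \<theta>(1)] by blast
  obtain B where B: "B \<subseteq> A" "independent B" "A \<subseteq> span B"
    using maximal_independent_subset[of A] by blast
  have span_B: "span B = A" using span_subspace[OF B(1,3) A(1)] .
  have "inj_on g (span B)"
    using inj_on_cong[of A g \<theta>] g(2) \<theta>(2) span_B by simp
  moreover have "g ` B \<subseteq> V" using g(2) B(1) \<theta>(3) by auto
  ultimately obtain \<tau> where "Vector_Spaces.linear s s \<tau>" "bij_betw \<tau> V V" "\<And>x. x \<in> span B \<Longrightarrow> \<tau> x = g x"
    using linear_extends_to_automorphism[OF vs V _ B(2) g(1)] B(1) A(2) by blast
  then show ?thesis using that linear_imp_lin_on g(2) span_B by metis
qed

lemma lin_on_subspace_image:
  assumes "vector_space s" "vector_space t" "module.subspace s S" "lin_on s t S f"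
  shows "module.subspace t (f ` S)"
proof -
  interpret S: vector_space s by fact
  interpret T: vector_space t by fact
  show ?thesis
  proof (rule T.subspaceI)
    show "0 \<in> f ` S" using lin_on_zero[OF assms(1,3,4)] S.subspace_0[OF assms(3)] by force
  next
    fix x y assume "x \<in> f ` S" "y \<in> f ` S"
    then obtain u w where "u \<in> S" "w \<in> S" "x = f u" "y = f w" by blast
    then show "x + y \<in> f ` S"
      using assms(4) S.subspace_add[OF assms(3)] unfolding lin_on_def by (metis image_eqI)
  next
    fix c x assume "x \<in> f ` S"
    then obtain u where "u \<in> S" "x = f u" by blast
    then show "t c x \<in> f ` S"
      using assms(4) S.subspace_scale[OF assms(3)] unfolding lin_on_def by (metis image_eqI)
  qed
qed

lemma lin_on_subspace_kernel:
  assumes "vector_space s" "vector_space t" "module.subspace s S" "lin_on s t S f"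
  shows "module.subspace s {x \<in> S. f x = 0}"
proof -
  interpret S: vector_space s by fact
  interpret T: vector_space t by fact
  show ?thesis
  proof (rule S.subspaceI)
    show "0 \<in> {x \<in> S. f x = 0}" using lin_on_zero[OF assms(1,3,4)] S.subspace_0[OF assms(3)] by simp
  qed (use assms(4) S.subspace_add[OF assms(3)] S.subspace_scale[OF assms(3)] in \<open>auto simp: lin_on_def\<close>)
qed

lemma lin_on_sums:
  assumes vs: "vector_space s" "vector_space t" and A: "module.subspace s A" and B: "module.subspace s B"
    and f: "lin_on s t A f" and g: "lin_on s t B g"
    and F: "\<And>a b. a \<in> A \<Longrightarrow> b \<in> B \<Longrightarrow> F (a + b) = f a + g b"
  shows "lin_on s t {a + b | a b. a \<in> A \<and> b \<in> B} F"
  unfolding lin_on_def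
proof (intro conjI allI ballI)
  interpret S: vector_space s by (rule vs(1))
  interpret T: vector_space t by (rule vs(2))
  fix x y assume "x \<in> {a + b | a b. a \<in> A \<and> b \<in> B}" "y \<in> {a + b | a b. a \<in> A \<and> b \<in> B}"
  then obtain a b a' b' where ab: "a \<in> A" "b \<in> B" "a' \<in> A" "b' \<in> B" "x = a + b" "y = a' + b'"
    by blast
  have "a + a' \<in> A" "b + b' \<in> B" using ab S.subspace_add[OF A] S.subspace_add[OF B] by auto
  then have "F ((a + a') + (b + b')) = f (a + a') + g (b + b')" by (rule F)
  also have "\<dots> = (f a + g b) + (f a' + g b')"
    using ab f g unfolding lin_on_def by (simp add: algebra_simps)
  also have "\<dots> = F x + F y" using F ab by simp
  finally show "F (x + y) = F x + F y" using ab by (simp add: algebra_simps)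
next
  interpret S: vector_space s by (rule vs(1))
  interpret T: vector_space t by (rule vs(2))
  fix c x assume "x \<in> {a + b | a b. a \<in> A \<and> b \<in> B}"
  then obtain a b where ab: "a \<in> A" "b \<in> B" "x = a + b" by blast
  have "s c a \<in> A" "s c b \<in> B" using ab S.subspace_scale[OF A] S.subspace_scale[OF B] by auto
  then show "F (s c x) = t c (F x)"
    using F ab f g S.scale_right_distrib T.scale_right_distrib unfolding lin_on_def by simp
qed

section \<open>Modules, submodules and homomorphisms\<close>

lemma rep_simps [simp]: "rsc (s, V, X) = s" "rsp (s, V, X) = V" "rmap (s, V, X) = X"
  by (simp_all add: rsc_def rsp_def rmap_def)

lemma rep_eta: "(rsc M, rsp M, rmap M) = M"
  by (simp add: rsc_def rsp_def rmap_def)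

lemma is_module_vector_space: "is_module G M \<Longrightarrow> vector_space (rsc M)"
  by (simp add: is_module_def)

lemma is_module_subspace: "is_module G M \<Longrightarrow> module.subspace (rsc M) (rsp M i)"
  by (simp add: is_module_def)

lemma is_module_arrow_into:
  "is_module G M \<Longrightarrow> h \<in> garr G \<Longrightarrow> rmap M h ` rsp M (gsrc G h) \<subseteq> rsp M (gtgt G h)"
  by (simp add: is_module_def)

lemma is_module_arrow_lin:
  "is_module G M \<Longrightarrow> h \<in> garr G \<Longrightarrow> lin_on (rsc M) (rsc M) (rsp M (gsrc G h)) (rmap M h)"
  by (simp add: is_module_def)

lemma is_module_preproj_rel: "is_module G M \<Longrightarrow> v \<in> rsp M i \<Longrightarrow>
   (\<Sum>h\<in>{h\<in>garr G. gtgt G h = i}. rsc M (geps G h) (rmap M h (rmap M (gbar G h) v))) = 0"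
  by (simp add: is_module_def)

lemma is_submodule_subspace: "is_submodule G M U \<Longrightarrow> module.subspace (rsc M) (U i)"
  by (simp add: is_submodule_def)

lemma is_submodule_subset: "is_submodule G M U \<Longrightarrow> U i \<subseteq> rsp M i"
  by (simp add: is_submodule_def)

lemma is_submodule_arrow_into:
  "is_submodule G M U \<Longrightarrow> h \<in> garr G \<Longrightarrow> rmap M h ` U (gsrc G h) \<subseteq> U (gtgt G h)"
  by (simp add: is_submodule_def)

lemma is_hom_lin_on: "is_hom G M N f \<Longrightarrow> lin_on (rsc M) (rsc N) (rsp M i) (f i)"
  by (simp add: is_hom_def)

lemma is_hom_into: "is_hom G M N f \<Longrightarrow> x \<in> rsp M i \<Longrightarrow> f i x \<in> rsp N i"
  by (auto simp: is_hom_def)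

lemma is_hom_commutes: "is_hom G M N f \<Longrightarrow> h \<in> garr G \<Longrightarrow> v \<in> rsp M (gsrc G h) \<Longrightarrow>
   f (gtgt G h) (rmap M h v) = rmap N h (f (gsrc G h) v)"
  by (simp add: is_hom_def)

lemma is_module_arrow_zero: "is_module G M \<Longrightarrow> h \<in> garr G \<Longrightarrow> rmap M h 0 = 0"
  by (rule lin_on_zero[OF is_module_vector_space is_module_subspace is_module_arrow_lin])

lemma is_submodule_zero:
  assumes "is_module G M" "is_submodule G M U"
  shows "0 \<in> U k"
  using module.subspace_0[OF _ is_submodule_subspace[OF assms(2)]] is_module_vector_space[OF assms(1)]
  by (simp add: module_iff_vector_space)

abbreviation submod_rep :: "('i,'h,'v) rep \<Rightarrow> ('i \<Rightarrow> 'v set) \<Rightarrow> ('i,'h,'v) rep" where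
  "submod_rep M U \<equiv> (rsc M, U, rmap M)"

lemma is_module_submod_rep:
  assumes "is_module G M" "is_submodule G M U"
  shows "is_module G (submod_rep M U)"
  unfolding is_module_def rep_simps
proof (intro conjI allI ballI)
  show "vector_space (rsc M)" by (rule is_module_vector_space[OF assms(1)])
  fix i show "module.subspace (rsc M) (U i)" by (rule is_submodule_subspace[OF assms(2)])
next
  fix h assume h: "h \<in> garr G"
  show "rmap M h ` U (gsrc G h) \<subseteq> U (gtgt G h)" by (rule is_submodule_arrow_into[OF assms(2) h])
  show "lin_on (rsc M) (rsc M) (U (gsrc G h)) (rmap M h)"
    by (rule lin_on_subset[OF is_module_arrow_lin[OF assms(1) h] is_submodule_subset[OF assms(2)]])
next
  fix i v assume "v \<in> U i"
  then show "(\<Sum>h\<in>{h \<in> garr G. gtgt G h = i}. rsc M (geps G h) (rmap M h (rmap M (gbar G h) v))) = 0"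
    using is_module_preproj_rel[OF assms(1)] is_submodule_subset[OF assms(2)] by blast
qed

lemma is_submodule_hom_image:
  assumes M: "is_module G M" and N: "is_module G N" and f: "is_hom G M N f"
  shows "is_submodule G N (\<lambda>k. f k ` rsp M k)"
  unfolding is_submodule_def
proof (intro conjI allI ballI)
  fix i
  show "module.subspace (rsc N) (f i ` rsp M i)"
    by (rule lin_on_subspace_image[OF is_module_vector_space[OF M] is_module_vector_space[OF N]
          is_module_subspace[OF M] is_hom_lin_on[OF f]])
  show "f i ` rsp M i \<subseteq> rsp N i" using is_hom_into[OF f] by blast
next
  fix h assume h: "h \<in> garr G"
  show "rmap N h ` f (gsrc G h) ` rsp M (gsrc G h) \<subseteq> f (gtgt G h) ` rsp M (gtgt G h)"
    using is_hom_commutes[OF f h, symmetric] is_module_arrow_into[OF M h] by blast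
qed

lemma is_submodule_hom_kernel:
  assumes M: "is_module G M" and N: "is_module G N" and f: "is_hom G M N f"
  shows "is_submodule G M (\<lambda>k. {x \<in> rsp M k. f k x = 0})"
  unfolding is_submodule_def
proof (intro conjI allI ballI)
  fix i
  show "module.subspace (rsc M) {x \<in> rsp M i. f i x = 0}"
    by (rule lin_on_subspace_kernel[OF is_module_vector_space[OF M] is_module_vector_space[OF N]
          is_module_subspace[OF M] is_hom_lin_on[OF f]])
next
  fix h assume h: "h \<in> garr G"
  have "rmap N h 0 = 0" by (rule is_module_arrow_zero[OF N h])
  then show "rmap M h ` {x \<in> rsp M (gsrc G h). f (gsrc G h) x = 0} \<subseteq> {x \<in> rsp M (gtgt G h). f (gtgt G h) x = 0}"
    using is_hom_commutes[OF f h] is_module_arrow_into[OF M h] by auto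
qed auto

definition submod_sum :: "('i \<Rightarrow> 'v::ab_group_add set) \<Rightarrow> ('i \<Rightarrow> 'v set) \<Rightarrow> 'i \<Rightarrow> 'v set" where
  "submod_sum D C k = {d + c | d c. d \<in> D k \<and> c \<in> C k}"

lemma is_submodule_sum:
  assumes M: "is_module G M" and D: "is_submodule G M D" and C: "is_submodule G M C"
  shows "is_submodule G M (submod_sum D C)"
  unfolding is_submodule_def
proof (intro conjI allI ballI)
  interpret vector_space "rsc M" by (rule is_module_vector_space[OF M])
  fix i
  show "subspace (submod_sum D C i)"
    unfolding submod_sum_def by (rule subspace_sums[OF is_submodule_subspace[OF D] is_submodule_subspace[OF C]])
  show "submod_sum D C i \<subseteq> rsp M i"
  proof
    fix x assume "x \<in> submod_sum D C i"
    then obtain d c where "d \<in> D i" "c \<in> C i" "x = d + c" by (auto simp: submod_sum_def)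
    then show "x \<in> rsp M i"
      using is_submodule_subset[OF D] is_submodule_subset[OF C] subspace_add[OF is_module_subspace[OF M]]
      by blast
  qed
next
  fix h assume h: "h \<in> garr G"
  have "rmap M h (d + c) = rmap M h d + rmap M h c" if "d \<in> D (gsrc G h)" "c \<in> C (gsrc G h)" for d c
    using is_module_arrow_lin[OF M h] that is_submodule_subset[OF D] is_submodule_subset[OF C]
    unfolding lin_on_def by blast
  then show "rmap M h ` submod_sum D C (gsrc G h) \<subseteq> submod_sum D C (gtgt G h)"
    using is_submodule_arrow_into[OF D h] is_submodule_arrow_into[OF C h]
    unfolding submod_sum_def by fastforce
qed

lemma submod_sum_supset:
  assumes M: "is_module G M" and D: "is_submodule G M D" and C: "is_submodule G M C"
  shows "D k \<subseteq> submod_sum D C k" "C k \<subseteq> submod_sum D C k"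
proof -
  have "0 \<in> D k" "0 \<in> C k" using is_submodule_zero[OF M] D C by auto
  then show "D k \<subseteq> submod_sum D C k" "C k \<subseteq> submod_sum D C k"
    unfolding submod_sum_def by force+
qed

lemma is_hom_submod_sum:
  assumes M: "is_module G M" and N: "is_module G N"
    and D: "is_submodule G M D" and C: "is_submodule G M C"
    and f: "is_hom G (submod_rep M D) N f" and g: "is_hom G (submod_rep M C) N g"
    and F: "\<And>k d c. d \<in> D k \<Longrightarrow> c \<in> C k \<Longrightarrow> F k (d + c) = f k d + g k c"
  shows "is_hom G (submod_rep M (submod_sum D C)) N F"
  unfolding is_hom_def rep_simps
proof (intro conjI allI ballI)
  fix i
  have "lin_on (rsc M) (rsc N) (D i) (f i)" "lin_on (rsc M) (rsc N) (C i) (g i)"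
    using is_hom_lin_on[OF f] is_hom_lin_on[OF g] by simp_all
  then show "lin_on (rsc M) (rsc N) (submod_sum D C i) (F i)"
    unfolding submod_sum_def
    by (rule lin_on_sums[where f = "f i" and g = "g i" and F = "F i", OF is_module_vector_space[OF M] is_module_vector_space[OF N]
          is_submodule_subspace[OF D, of i] is_submodule_subspace[OF C, of i] _ _ F[where k = i]])
  show "F i ` submod_sum D C i \<subseteq> rsp N i"
    using F is_hom_into[OF f] is_hom_into[OF g]
      module.subspace_add[OF _ is_module_subspace[OF N]] is_module_vector_space[OF N]
    by (fastforce simp: submod_sum_def module_iff_vector_space)
next
  fix h x assume h: "h \<in> garr G" and "x \<in> submod_sum D C (gsrc G h)"
  then obtain d c where dc: "d \<in> D (gsrc G h)" "c \<in> C (gsrc G h)" "x = d + c"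
    by (auto simp: submod_sum_def)
  have "rmap M h x = rmap M h d + rmap M h c"
    using is_module_arrow_lin[OF M h] dc is_submodule_subset[OF D] is_submodule_subset[OF C]
    unfolding lin_on_def by blast
  moreover have "rmap M h d \<in> D (gtgt G h)" "rmap M h c \<in> C (gtgt G h)"
    using is_submodule_arrow_into[OF D h] is_submodule_arrow_into[OF C h] dc by auto
  moreover have "rmap N h (f (gsrc G h) d + g (gsrc G h) c)
      = rmap N h (f (gsrc G h) d) + rmap N h (g (gsrc G h) c)"
    using is_module_arrow_lin[OF N h] is_hom_into[OF f] is_hom_into[OF g] dc
    unfolding lin_on_def by simp
  ultimately show "F (gtgt G h) (rmap M h x) = rmap N h (F (gsrc G h) x)"
    using F dc is_hom_commutes[OF f h] is_hom_commutes[OF g h] by simp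
qed

lemma hom_glue:
  assumes M: "is_module G M" and N: "is_module G N"
    and D: "is_submodule G M D" and C: "is_submodule G M C"
    and f: "is_hom G (submod_rep M D) N f" and g: "is_hom G (submod_rep M C) N g"
    and agree: "\<And>k x. x \<in> D k \<Longrightarrow> x \<in> C k \<Longrightarrow> f k x = g k x"
  obtains F where "is_hom G (submod_rep M (submod_sum D C)) N F"
    "\<And>k x. x \<in> D k \<Longrightarrow> F k x = f k x" "\<And>k x. x \<in> C k \<Longrightarrow> F k x = g k x"
proof -
  interpret VM: vector_space "rsc M" by (rule is_module_vector_space[OF M])
  have subD: "VM.subspace (D k)" and subC: "VM.subspace (C k)" for k
    using is_submodule_subspace[OF D] is_submodule_subspace[OF C] by auto
  have lin_f: "lin_on (rsc M) (rsc N) (D k) (f k)" and lin_g: "lin_on (rsc M) (rsc N) (C k) (g k)" for k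
    using is_hom_lin_on[OF f] is_hom_lin_on[OF g] by auto
  have well_defined: "f k d + g k c = f k d' + g k c'"
    if "d \<in> D k" "c \<in> C k" "d' \<in> D k" "c' \<in> C k" "d + c = d' + c'" for k d c d' c'
  proof -
    have "d - d' = c' - c" using that(5) by (simp add: algebra_simps)
    moreover have "d - d' \<in> D k" "c' - c \<in> C k"
      using that VM.subspace_diff[OF subD] VM.subspace_diff[OF subC] by auto
    ultimately have "f k (d - d') = g k (c' - c)" using agree by simp
    then show ?thesis
      using lin_on_diff[OF VM.vector_space_axioms subD lin_f] lin_on_diff[OF VM.vector_space_axioms subC lin_g]
        that by (simp add: algebra_simps)
  qed
  define F where "F k z = (SOME w. \<exists>d c. d \<in> D k \<and> c \<in> C k \<and> z = d + c \<and> w = f k d + g k c)" for k z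
  have F: "F k (d + c) = f k d + g k c" if "d \<in> D k" "c \<in> C k" for k d c
  proof -
    have "\<exists>w d' c'. d' \<in> D k \<and> c' \<in> C k \<and> d + c = d' + c' \<and> w = f k d' + g k c'" using that by blast
    from someI_ex[OF this] show ?thesis using well_defined that unfolding F_def by metis
  qed
  have D0: "0 \<in> D k" and C0: "0 \<in> C k" for k using VM.subspace_0 subD subC by auto
  have f0: "f k 0 = 0" and g0: "g k 0 = 0" for k
    using lin_on_zero[OF VM.vector_space_axioms subD lin_f] lin_on_zero[OF VM.vector_space_axioms subC lin_g]
    by auto
  have "F k x = f k x" if "x \<in> D k" for k x using F[OF that C0] g0 by simp
  moreover have "F k x = g k x" if "x \<in> C k" for k x using F[OF D0 that] f0 by simp
  ultimately show ?thesis using that[OF is_hom_submod_sum[OF M N D C f g F]] by blast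
qed

lemma is_hom_restrict:
  assumes "is_hom G M N f" "is_submodule G M U"
  shows "is_hom G (submod_rep M U) N f"
  unfolding is_hom_def rep_simps
proof (intro conjI allI ballI)
  fix i
  show "lin_on (rsc M) (rsc N) (U i) (f i)"
    by (rule lin_on_subset[OF is_hom_lin_on[OF assms(1)] is_submodule_subset[OF assms(2)]])
  show "f i ` U i \<subseteq> rsp N i" using is_hom_into[OF assms(1)] is_submodule_subset[OF assms(2)] by blast
next
  fix h v assume "h \<in> garr G" "v \<in> U (gsrc G h)"
  then show "f (gtgt G h) (rmap M h v) = rmap N h (f (gsrc G h) v)"
    using is_hom_commutes[OF assms(1)] is_submodule_subset[OF assms(2)] by blast
qed

lemma is_hom_comp:
  assumes f: "is_hom G M N f" and g: "is_hom G N P g"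
  shows "is_hom G M P (\<lambda>k x. g k (f k x))"
  unfolding is_hom_def
proof (intro conjI allI ballI)
  fix i
  note lin_f = is_hom_lin_on[OF f, of i, unfolded lin_on_def]
  note lin_g = is_hom_lin_on[OF g, of i, unfolded lin_on_def]
  show "lin_on (rsc M) (rsc P) (rsp M i) (\<lambda>x. g i (f i x))"
    unfolding lin_on_def
  proof (intro conjI ballI allI)
    fix x y assume "x \<in> rsp M i" "y \<in> rsp M i"
    then show "g i (f i (x + y)) = g i (f i x) + g i (f i y)"
      using lin_f lin_g is_hom_into[OF f] by simp
  next
    fix c x assume "x \<in> rsp M i"
    then show "g i (f i (rsc M c x)) = rsc P c (g i (f i x))"
      using lin_f lin_g is_hom_into[OF f] by simp
  qed
  show "(\<lambda>x. g i (f i x)) ` rsp M i \<subseteq> rsp P i" using is_hom_into[OF f] is_hom_into[OF g] by blast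
next
  fix h v assume "h \<in> garr G" "v \<in> rsp M (gsrc G h)"
  then show "g (gtgt G h) (f (gtgt G h) (rmap M h v)) = rmap P h (g (gsrc G h) (f (gsrc G h) v))"
    using is_hom_commutes[OF f] is_hom_commutes[OF g] is_hom_into[OF f] by simp
qed

lemma is_hom_inv:
  assumes M: "is_module G M" and f: "is_iso G M N f"
  shows "is_hom G N M (\<lambda>k. inv_into (rsp M k) (f k))"
proof -
  interpret vector_space "rsc M" by (rule is_module_vector_space[OF M])
  have hom: "is_hom G M N f" and bij: "\<And>k. bij_betw (f k) (rsp M k) (rsp N k)"
    using f by (auto simp: is_iso_def)
  have inv: "inv_into (rsp M k) (f k) (f k x) = x" if "x \<in> rsp M k" for k x
    using bij[of k] that by (simp add: bij_betw_def inv_into_f_f)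
  have pre: "\<exists>x\<in>rsp M k. y = f k x" if "y \<in> rsp N k" for k y
    using bij[of k] that by (auto simp: bij_betw_def)
  have lin: "lin_on (rsc M) (rsc N) (rsp M k) (f k)" for k by (rule is_hom_lin_on[OF hom])
  show ?thesis
    unfolding is_hom_def
  proof (intro conjI allI ballI)
    fix i
    show "lin_on (rsc N) (rsc M) (rsp N i) (inv_into (rsp M i) (f i))"
      unfolding lin_on_def
    proof (intro conjI allI ballI)
      fix y z assume "y \<in> rsp N i" "z \<in> rsp N i"
      then obtain x w where "x \<in> rsp M i" "w \<in> rsp M i" "y = f i x" "z = f i w" using pre by metis
      then show "inv_into (rsp M i) (f i) (y + z) = inv_into (rsp M i) (f i) y + inv_into (rsp M i) (f i) z"
        using lin[of i] inv subspace_add[OF is_module_subspace[OF M]] unfolding lin_on_def by metis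
    next
      fix c y assume "y \<in> rsp N i"
      then obtain x where "x \<in> rsp M i" "y = f i x" using pre by metis
      then show "inv_into (rsp M i) (f i) (rsc N c y) = rsc M c (inv_into (rsp M i) (f i) y)"
        using lin[of i] inv subspace_scale[OF is_module_subspace[OF M]] unfolding lin_on_def by metis
    qed
    show "inv_into (rsp M i) (f i) ` rsp N i \<subseteq> rsp M i"
      using bij[of i] inv_into_into[of _ "f i" "rsp M i"] by (auto simp: bij_betw_def)
  next
    fix h y assume h: "h \<in> garr G" and "y \<in> rsp N (gsrc G h)"
    then obtain x where x: "x \<in> rsp M (gsrc G h)" "y = f (gsrc G h) x" using pre by metis
    have "rmap M h x \<in> rsp M (gtgt G h)" using is_module_arrow_into[OF M h] x(1) by blast
    moreover have "rmap N h y = f (gtgt G h) (rmap M h x)" using is_hom_commutes[OF hom h x(1)] x(2) by simp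
    ultimately show "inv_into (rsp M (gtgt G h)) (f (gtgt G h)) (rmap N h y) = rmap M h (inv_into (rsp M (gsrc G h)) (f (gsrc G h)) y)"
      using inv x by simp
  qed
qed

lemma is_iso_restrict:
  assumes "is_iso G M N f" "is_submodule G M U"
  shows "is_iso G (submod_rep M U) (submod_rep N (\<lambda>k. f k ` U k)) f"
proof -
  have hom: "is_hom G M N f" and inj: "\<And>k. inj_on (f k) (rsp M k)"
    using assms(1) by (auto simp: is_iso_def bij_betw_def)
  have "is_hom G (submod_rep M U) (submod_rep N (\<lambda>k. f k ` U k)) f"
    using is_hom_restrict[OF hom assms(2)] unfolding is_hom_def by auto
  moreover have "bij_betw (f k) (U k) (f k ` U k)" for k
    using inj_on_subset[OF inj is_submodule_subset[OF assms(2)]] by (simp add: bij_betw_def)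
  ultimately show ?thesis by (simp add: is_iso_def)
qed

lemma is_mono_inclusion:
  assumes "is_submodule G N U"
  shows "is_mono G (submod_rep N U) N (\<lambda>k x. x)"
  using is_submodule_subset[OF assms]
  unfolding is_mono_def is_hom_def lin_on_def by auto

lemma is_iso_onto_image:
  assumes "is_mono G X E f"
  shows "is_iso G X (submod_rep E (\<lambda>k. f k ` rsp X k)) f"
  using assms unfolding is_mono_def is_iso_def is_hom_def by (auto simp: bij_betw_def)

lemma mono_image_iso:
  assumes X: "is_module G X" and f1: "is_mono G X E f1" and f2: "is_mono G X E f2"
  obtains \<theta> where "is_hom G (submod_rep E (\<lambda>k. f1 k ` rsp X k)) E \<theta>"
    "\<And>k. bij_betw (\<theta> k) (f1 k ` rsp X k) (f2 k ` rsp X k)"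
    "\<And>k x. x \<in> rsp X k \<Longrightarrow> \<theta> k (f1 k x) = f2 k x"
proof
  define \<theta> where "\<theta> = (\<lambda>k y. f2 k (inv_into (rsp X k) (f1 k) y))"
  have inj: "inj_on (f1 k) (rsp X k)" "inj_on (f2 k) (rsp X k)" for k
    using f1 f2 by (auto simp: is_mono_def)
  show "is_hom G (submod_rep E (\<lambda>k. f1 k ` rsp X k)) E \<theta>"
    unfolding \<theta>_def
    using is_hom_comp[OF is_hom_inv[OF X is_iso_onto_image[OF f1]] conjunct1[OF f2[unfolded is_mono_def]]] .
  show "bij_betw (\<theta> k) (f1 k ` rsp X k) (f2 k ` rsp X k)" for k
  proof -
    have "bij_betw (f2 k \<circ> inv_into (rsp X k) (f1 k)) (f1 k ` rsp X k) (f2 k ` rsp X k)"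
      by (rule bij_betw_trans[OF bij_betw_inv_into[OF inj_on_imp_bij_betw[OF inj(1)]] inj_on_imp_bij_betw[OF inj(2)]])
    then show ?thesis by (simp add: \<theta>_def comp_def)
  qed
  show "\<theta> k (f1 k x) = f2 k x" if "x \<in> rsp X k" for k x
    unfolding \<theta>_def using inj that by (simp add: inv_into_f_f)
qed

section \<open>Injective modules\<close>

lemma vector_space_fun_sc: "vector_space fun_sc"
  by unfold_locales (auto simp: fun_sc_def algebra_simps)

definition unit_vec :: "nat \<Rightarrow> nat \<Rightarrow> complex" where
  "unit_vec n = (\<lambda>m. if m = n then 1 else 0)"

lemma unit_vec_eq_iff: "unit_vec n = unit_vec m \<longleftrightarrow> n = m"
  by (metis unit_vec_def one_neq_zero)

lemma sum_fun_apply: "(\<Sum>x\<in>A. f x) p = (\<Sum>x\<in>A. f x p)"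
  by (induction A rule: infinite_finite_induct) auto

lemma independent_unit_vecs: "\<not> module.dependent fun_sc (unit_vec ` A)"
proof -
  interpret vector_space fun_sc by (rule vector_space_fun_sc)
  show ?thesis
    unfolding independent_explicit_finite_subsets
  proof (intro allI impI ballI)
    fix S u v assume S: "S \<subseteq> unit_vec ` A" "finite S" and sum0: "(\<Sum>v\<in>S. fun_sc (u v) v) = 0"
      and v: "v \<in> S"
    then obtain n where n: "v = unit_vec n" by auto
    have "(\<Sum>w\<in>S. fun_sc (u w) w) n = (\<Sum>w\<in>S. if w = v then u w else 0)"
    proof (unfold sum_fun_apply, rule sum.cong[OF refl])
      fix w assume "w \<in> S"
      then obtain m where "w = unit_vec m" using S by auto
      then show "fun_sc (u w) w n = (if w = v then u w else 0)"
        by (auto simp: n unit_vec_eq_iff fun_sc_def) (auto simp: unit_vec_def)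
    qed
    also have "\<dots> = u v" using v S by simp
    finally show "u v = 0" using sum0 by simp
  qed
qed

lemma countable_span_embeds_in_fun_sc:
  assumes vs: "vector_space s" and R: "countable R" and V: "V \<subseteq> module.span s R"
  obtains T where "Vector_Spaces.linear s fun_sc T" "inj_on T V"
proof -
  interpret vs: vector_space s by (rule vs)
  interpret P: vector_space_pair s fun_sc by (intro vector_space_pair.intro vs vector_space_fun_sc)
  obtain B where B: "B \<subseteq> R" "vs.independent B" "R \<subseteq> vs.span B"
    using vs.maximal_independent_subset[of R] by blast
  have cB: "countable B" using B(1) R countable_subset by blast
  define T where "T = P.construct B (\<lambda>b. unit_vec (to_nat_on B b))"
  have lin: "Vector_Spaces.linear s fun_sc T" unfolding T_def by (rule P.linear_construct[OF B(2)])
  have TB: "T b = unit_vec (to_nat_on B b)" if "b \<in> B" for b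
    unfolding T_def using P.construct_basis[OF B(2) that] .
  have "T ` B = unit_vec ` to_nat_on B ` B" using TB by (force simp: image_image)
  then have "\<not> module.dependent fun_sc (T ` B)" using independent_unit_vecs by simp
  moreover have "inj_on T B" by (rule inj_onI) (metis TB unit_vec_eq_iff cB to_nat_on_inj)
  ultimately have "inj_on T (vs.span B)"
    using P.linear_inj_on_span_iff_independent_image[OF lin] by simp
  moreover have "V \<subseteq> vs.span B" using V B(3) vs.span_mono vs.span_span by blast
  ultimately show ?thesis using that lin inj_on_subset by blast
qed

definition transport :: "('i,'h) graph \<Rightarrow> ('i,'h,'v::ab_group_add) rep \<Rightarrow> ('i \<Rightarrow> 'v \<Rightarrow> nat \<Rightarrow> complex)
    \<Rightarrow> ('i,'h,nat \<Rightarrow> complex) rep" where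
  "transport G N T = (fun_sc, (\<lambda>k. T k ` rsp N k),
     (\<lambda>h w. T (gtgt G h) (rmap N h (inv_into (rsp N (gsrc G h)) (T (gsrc G h)) w))))"

lemma transport_simps:
  "rsc (transport G N T) = fun_sc" "rsp (transport G N T) k = T k ` rsp N k"
  by (simp_all add: transport_def)

lemma transport_rmap:
  assumes "inj_on (T (gsrc G h)) (rsp N (gsrc G h))" "x \<in> rsp N (gsrc G h)"
  shows "rmap (transport G N T) h (T (gsrc G h) x) = T (gtgt G h) (rmap N h x)"
  using assms by (simp add: transport_def)

lemma is_iso_transport:
  assumes lin: "\<And>k. Vector_Spaces.linear (rsc N) fun_sc (T k)" and inj: "\<And>k. inj_on (T k) (rsp N k)"
  shows "is_iso G N (transport G N T) T"
  unfolding is_iso_def is_hom_def transport_simps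
  using linear_imp_lin_on[OF lin] inj by (simp add: bij_betw_def transport_rmap)

lemma transport_arrow_lin:
  assumes N: "is_module G N" and h: "h \<in> garr G"
    and lin: "\<And>k. Vector_Spaces.linear (rsc N) fun_sc (T k)" and inj: "\<And>k. inj_on (T k) (rsp N k)"
  shows "lin_on fun_sc fun_sc (rsp (transport G N T) (gsrc G h)) (rmap (transport G N T) h)"
proof -
  interpret VN: vector_space "rsc N" by (rule is_module_vector_space[OF N])
  let ?N' = "transport G N T"
  have tr: "rmap ?N' h (T (gsrc G h) x) = T (gtgt G h) (rmap N h x)" if "x \<in> rsp N (gsrc G h)" for x
    using transport_rmap inj that .
  have T: "T k (x + y) = T k x + T k y" "T k (rsc N c x) = fun_sc c (T k x)" for k c x y
    using lin[of k] by (simp_all add: Vector_Spaces.linear_iff)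
  have sub: "VN.subspace (rsp N (gsrc G h))" by (rule is_module_subspace[OF N])
  have lin_h: "lin_on (rsc N) (rsc N) (rsp N (gsrc G h)) (rmap N h)" by (rule is_module_arrow_lin[OF N h])
  show ?thesis
    unfolding lin_on_def transport_simps
  proof (intro conjI ballI allI)
    fix a b assume "a \<in> T (gsrc G h) ` rsp N (gsrc G h)" "b \<in> T (gsrc G h) ` rsp N (gsrc G h)"
    then obtain x y where xy: "x \<in> rsp N (gsrc G h)" "y \<in> rsp N (gsrc G h)"
      "a = T (gsrc G h) x" "b = T (gsrc G h) y" by blast
    have "rmap ?N' h (a + b) = rmap ?N' h (T (gsrc G h) (x + y))" using xy T(1) by simp
    also have "\<dots> = T (gtgt G h) (rmap N h x + rmap N h y)"
      using tr VN.subspace_add[OF sub] xy lin_h unfolding lin_on_def by simp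
    also have "\<dots> = rmap ?N' h a + rmap ?N' h b" using T(1) tr xy by simp
    finally show "rmap ?N' h (a + b) = rmap ?N' h a + rmap ?N' h b" .
  next
    fix c a assume "a \<in> T (gsrc G h) ` rsp N (gsrc G h)"
    then obtain x where x: "x \<in> rsp N (gsrc G h)" "a = T (gsrc G h) x" by blast
    have "rmap ?N' h (fun_sc c a) = rmap ?N' h (T (gsrc G h) (rsc N c x))" using x T(2) by simp
    also have "\<dots> = T (gtgt G h) (rsc N c (rmap N h x))"
      using tr VN.subspace_scale[OF sub] x lin_h unfolding lin_on_def by simp
    also have "\<dots> = fun_sc c (rmap ?N' h a)" using T(2) tr x by simp
    finally show "rmap ?N' h (fun_sc c a) = fun_sc c (rmap ?N' h a)" .
  qed
qed

lemma transport_preproj_rel: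
  fixes G :: "('i::finite,'h) graph"
  assumes dg: "double_graph G" and N: "is_module G N"
    and lin: "\<And>k. Vector_Spaces.linear (rsc N) fun_sc (T k)" and inj: "\<And>k. inj_on (T k) (rsp N k)"
    and v: "v \<in> rsp (transport G N T) i"
  shows "(\<Sum>h\<in>{h\<in>garr G. gtgt G h = i}.
      fun_sc (geps G h) (rmap (transport G N T) h (rmap (transport G N T) (gbar G h) v))) = 0"
proof -
  interpret VN: vector_space "rsc N" by (rule is_module_vector_space[OF N])
  interpret P: vector_space_pair "rsc N" fun_sc by (intro vector_space_pair.intro VN.vector_space_axioms vector_space_fun_sc)
  let ?N' = "transport G N T"
  have tr: "rmap ?N' h (T (gsrc G h) x) = T (gtgt G h) (rmap N h x)" if "x \<in> rsp N (gsrc G h)" for h x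
    using transport_rmap inj that .
  obtain x where x: "x \<in> rsp N i" "v = T i x" using v by (auto simp: transport_simps)
  have "fun_sc (geps G h) (rmap ?N' h (rmap ?N' (gbar G h) v))
      = T i (rsc N (geps G h) (rmap N h (rmap N (gbar G h) x)))"
    if h: "h \<in> garr G" "gtgt G h = i" for h
  proof -
    have bar: "gbar G h \<in> garr G" "gsrc G (gbar G h) = i" "gtgt G (gbar G h) = gsrc G h"
      using dg h unfolding double_graph_def by (metis, metis, metis)
    have "rmap N (gbar G h) x \<in> rsp N (gsrc G h)"
      using is_module_arrow_into[OF N bar(1)] x(1) bar by force
    then show ?thesis using tr[of x "gbar G h"] tr[of _ h] x bar h lin[of i] by (simp add: Vector_Spaces.linear_iff)
  qed
  then have "(\<Sum>h\<in>{h\<in>garr G. gtgt G h = i}. fun_sc (geps G h) (rmap ?N' h (rmap ?N' (gbar G h) v)))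
      = T i (\<Sum>h\<in>{h\<in>garr G. gtgt G h = i}. rsc N (geps G h) (rmap N h (rmap N (gbar G h) x)))"
    by (simp add: P.linear_sum[OF lin])
  also have "\<dots> = 0" using is_module_preproj_rel[OF N x(1)] P.linear_0[OF lin] by simp
  finally show ?thesis .
qed

lemma is_module_transport:
  fixes G :: "('i::finite,'h) graph"
  assumes dg: "double_graph G" and N: "is_module G N"
    and lin: "\<And>k. Vector_Spaces.linear (rsc N) fun_sc (T k)" and inj: "\<And>k. inj_on (T k) (rsp N k)"
  shows "is_module G (transport G N T)"
  unfolding is_module_def
proof (intro conjI allI ballI)
  interpret VN: vector_space "rsc N" by (rule is_module_vector_space[OF N])
  interpret P: vector_space_pair "rsc N" fun_sc by (intro vector_space_pair.intro VN.vector_space_axioms vector_space_fun_sc)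
  show "vector_space (rsc (transport G N T))" by (simp add: transport_simps vector_space_fun_sc)
  show "module.subspace (rsc (transport G N T)) (rsp (transport G N T) i)" for i
    unfolding transport_simps by (rule P.linear_subspace_image[OF lin is_module_subspace[OF N]])
  show "rmap (transport G N T) h ` rsp (transport G N T) (gsrc G h) \<subseteq> rsp (transport G N T) (gtgt G h)"
    if h: "h \<in> garr G" for h
    using is_module_arrow_into[OF N h] transport_rmap[where T = T and G = G and N = N and h = h, OF inj] by (auto simp: transport_simps)
  show "lin_on (rsc (transport G N T)) (rsc (transport G N T)) (rsp (transport G N T) (gsrc G h))
      (rmap (transport G N T) h)" if h: "h \<in> garr G" for h
    using transport_arrow_lin[OF N h lin inj] by (simp add: transport_simps)
  show "(\<Sum>h\<in>{h\<in>garr G. gtgt G h = i}. rsc (transport G N T) (geps G h)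
      (rmap (transport G N T) h (rmap (transport G N T) (gbar G h) v))) = 0"
    if "v \<in> rsp (transport G N T) i" for i v
    using transport_preproj_rel[OF dg N lin inj that] by (simp add: transport_simps)
qed

lemma is_injectiveD:
  fixes M N :: "('i::finite,'h,nat \<Rightarrow> complex) rep"
  assumes "is_injective G E" "rsc M = fun_sc" "rsc N = fun_sc" "is_module G M" "is_module G N"
    "is_mono G M N u" "is_hom G M E \<phi>"
  obtains \<psi> where "is_hom G N E \<psi>" "\<And>i v. v \<in> rsp M i \<Longrightarrow> \<psi> i (u i v) = \<phi> i v"
  using assms unfolding is_injective_def by blast

text \<open>\<open>is_injective\<close> only tests modules inside \<open>nat \<Rightarrow> complex\<close>; a module of countable
  dimension is carried there by injective linear maps.\<close>

lemma injective_extend_countable: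
  fixes G :: "('i::finite,'h) graph"
  assumes dg: "double_graph G" and I: "is_injective G I" and N: "is_module G N"
    and cnt: "\<And>k. \<exists>R. countable R \<and> rsp N k \<subseteq> module.span (rsc N) R"
    and U: "is_submodule G N U" and \<phi>: "is_hom G (submod_rep N U) I \<phi>"
  obtains \<chi> where "is_hom G N I \<chi>" "\<And>k x. x \<in> U k \<Longrightarrow> \<chi> k x = \<phi> k x"
proof -
  have "\<exists>T. Vector_Spaces.linear (rsc N) fun_sc T \<and> inj_on T (rsp N k)" for k
    using countable_span_embeds_in_fun_sc[OF is_module_vector_space[OF N]] cnt by metis
  then obtain T where lin: "\<And>k. Vector_Spaces.linear (rsc N) fun_sc (T k)"
    and inj: "\<And>k. inj_on (T k) (rsp N k)" by metis
  define N' where "N' = transport G N T"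
  define U' where "U' = (\<lambda>k. T k ` U k)"
  have N': "is_module G N'" unfolding N'_def by (rule is_module_transport[OF dg N lin inj])
  have T: "is_iso G N N' T" unfolding N'_def by (rule is_iso_transport[OF lin inj])
  have T_U: "is_iso G (submod_rep N U) (submod_rep N' U') T"
    unfolding U'_def using is_iso_restrict[OF T U] by (simp add: N'_def transport_simps)
  have U_mod: "is_module G (submod_rep N U)" by (rule is_module_submod_rep[OF N U])
  have "is_submodule G N' (\<lambda>k. T k ` rsp (submod_rep N U) k)"
    using is_submodule_hom_image[OF U_mod N' is_hom_restrict[OF _ U]] T by (simp add: is_iso_def)
  then have U': "is_submodule G N' U'" by (simp add: U'_def)
  define \<phi>' where "\<phi>' = (\<lambda>k y. \<phi> k (inv_into (U k) (T k) y))"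
  have "is_hom G (submod_rep N' U') I \<phi>'"
    unfolding \<phi>'_def using is_hom_comp[OF is_hom_inv[OF U_mod T_U] \<phi>] by simp
  moreover have "rsc (submod_rep N' U') = fun_sc" "rsc N' = fun_sc" by (simp_all add: N'_def transport_simps)
  ultimately obtain \<psi> where \<psi>: "is_hom G N' I \<psi>" "\<And>k y. y \<in> U' k \<Longrightarrow> \<psi> k y = \<phi>' k y"
    using is_injectiveD[OF I _ _ is_module_submod_rep[OF N' U'] N' is_mono_inclusion[OF U']] by auto
  have "\<psi> k (T k x) = \<phi> k x" if "x \<in> U k" for k x
    using \<psi>(2)[of "T k x" k] that inj_on_subset[OF inj is_submodule_subset[OF U]]
    by (simp add: U'_def \<phi>'_def inv_into_f_f)
  then show ?thesis using that is_hom_comp[OF conjunct1[OF T[unfolded is_iso_def]] \<psi>(1)] by blast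
qed

fun path_image :: "('i,'h,'v) rep \<Rightarrow> 'v \<Rightarrow> 'h list \<Rightarrow> 'v" where
  "path_image M v [] = v"
| "path_image M v (h # hs) = rmap M h (path_image M v hs)"

fun is_path :: "('i,'h) graph \<Rightarrow> 'i \<Rightarrow> 'h list \<Rightarrow> 'i \<Rightarrow> bool" where
  "is_path G j [] k \<longleftrightarrow> j = k"
| "is_path G j (h # hs) k \<longleftrightarrow> h \<in> garr G \<and> gtgt G h = k \<and> is_path G j hs (gsrc G h)"

lemma is_path_lists: "is_path G j hs k \<Longrightarrow> hs \<in> lists (garr G)"
  by (induction hs arbitrary: k) auto

lemma path_image_in:
  assumes "is_module G M" "v \<in> rsp M j"
  shows "is_path G j hs k \<Longrightarrow> path_image M v hs \<in> rsp M k"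
proof (induction hs arbitrary: k)
  case (Cons h hs)
  then show ?case using is_module_arrow_into[OF assms(1)] by auto
qed (use assms in simp)

lemma lin_on_image_span:
  assumes vs: "vector_space s" and V: "module.subspace s V" "S \<subseteq> V"
    and f: "lin_on s s V f" "f ` S \<subseteq> module.span s T"
  shows "f ` module.span s S \<subseteq> module.span s T"
proof -
  interpret vector_space s by fact
  have "subspace {x \<in> V. f x \<in> span T}"
  proof (rule subspaceI)
    show "0 \<in> {x \<in> V. f x \<in> span T}" using subspace_0[OF V(1)] lin_on_zero[OF vs V(1) f(1)] span_zero by simp
  qed (use subspace_add[OF V(1)] subspace_scale[OF V(1)] f(1) span_add span_scale in \<open>auto simp: lin_on_def\<close>)
  then show ?thesis using span_minimal[of S "{x \<in> V. f x \<in> span T}"] V(2) f(2) by blast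
qed

lemma cyclic_submodule_countable:
  assumes M: "is_module G M" and fin: "finite (garr G)" and v: "v \<in> rsp M j"
  obtains C where "is_submodule G M C" "v \<in> C j" "\<And>k. \<exists>R. countable R \<and> C k \<subseteq> module.span (rsc M) R"
proof -
  interpret vector_space "rsc M" by (rule is_module_vector_space[OF M])
  define R where "R k = {path_image M v hs | hs. is_path G j hs k}" for k
  define C where "C k = span (R k)" for k
  have RM: "R k \<subseteq> rsp M k" for k using path_image_in[OF M v] by (auto simp: R_def)
  have "R k \<subseteq> path_image M v ` lists (garr G)" for k
    unfolding R_def using is_path_lists[of G j _ k] by (auto intro!: imageI)
  then have "countable (R k)" for k
    by (rule countable_subset[OF _ countable_image[OF countable_lists[OF countable_finite[OF fin]]]])
  moreover have "is_submodule G M C"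
    unfolding is_submodule_def
  proof (intro conjI allI ballI)
    fix i show "subspace (C i)" by (simp add: C_def)
    show "C i \<subseteq> rsp M i" unfolding C_def using span_minimal[OF RM is_module_subspace[OF M]] .
  next
    fix h assume h: "h \<in> garr G"
    have "rmap M h ` R (gsrc G h) \<subseteq> R (gtgt G h)"
    proof
      fix y assume "y \<in> rmap M h ` R (gsrc G h)"
      then obtain hs where "is_path G j hs (gsrc G h)" "y = rmap M h (path_image M v hs)"
        by (auto simp: R_def)
      then have "is_path G j (h # hs) (gtgt G h)" "y = path_image M v (h # hs)" using h by simp_all
      then show "y \<in> R (gtgt G h)" unfolding R_def by blast
    qed
    then show "rmap M h ` C (gsrc G h) \<subseteq> C (gtgt G h)"
      unfolding C_def using lin_on_image_span[OF is_module_vector_space[OF M] is_module_subspace[OF M] RM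
        is_module_arrow_lin[OF M h]] span_superset by blast
  qed
  moreover have "v \<in> R j" unfolding R_def by (rule CollectI, rule exI[of _ "[]"]) simp
  then have "v \<in> C j" unfolding C_def by (rule span_base)
  ultimately show ?thesis using that unfolding C_def by blast
qed

lemma is_submodule_inter:
  assumes M: "is_module G M" and D: "is_submodule G M D" and C: "is_submodule G M C"
  shows "is_submodule G (submod_rep M C) (\<lambda>k. D k \<inter> C k)"
  unfolding is_submodule_def rep_simps
proof (intro conjI allI ballI)
  interpret vector_space "rsc M" by (rule is_module_vector_space[OF M])
  fix i
  show "subspace (D i \<inter> C i)"
    using subspace_inter is_submodule_subspace[OF D] is_submodule_subspace[OF C] by blast
  show "D i \<inter> C i \<subseteq> C i" by blast
next
  fix h assume "h \<in> garr G"
  then show "rmap M h ` (D (gsrc G h) \<inter> C (gsrc G h)) \<subseteq> D (gtgt G h) \<inter> C (gtgt G h)"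
    using is_submodule_arrow_into[OF D] is_submodule_arrow_into[OF C] by blast
qed

lemma hom_extends_to_vector:
  fixes G :: "('i::finite,'h) graph"
  assumes dg: "double_graph G" and N: "is_module G N" and I: "is_module G I" "is_injective G I"
    and D: "is_submodule G N D" and f: "is_hom G (submod_rep N D) I f" and v: "v \<in> rsp N j"
  obtains D' f' where "is_submodule G N D'" "is_hom G (submod_rep N D') I f'" "\<And>k. D k \<subseteq> D' k"
    "v \<in> D' j" "\<And>k x. x \<in> D k \<Longrightarrow> f' k x = f k x"
proof -
  have "finite (garr G)" using dg by (simp add: double_graph_def)
  then obtain C where C: "is_submodule G N C" "v \<in> C j" "\<And>k. \<exists>R. countable R \<and> C k \<subseteq> module.span (rsc N) R"
    using cyclic_submodule_countable[OF N _ v] by blast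
  have cnt: "\<exists>R. countable R \<and> rsp (submod_rep N C) k \<subseteq> module.span (rsc (submod_rep N C)) R" for k
    using C(3) by simp
  have "is_hom G (submod_rep (submod_rep N C) (\<lambda>k. D k \<inter> C k)) I f"
    using is_hom_restrict[OF f is_submodule_inter[OF N C(1) D]] by (simp add: Int_commute)
  then obtain \<chi> where \<chi>: "is_hom G (submod_rep N C) I \<chi>" "\<And>k x. x \<in> D k \<inter> C k \<Longrightarrow> \<chi> k x = f k x"
    using injective_extend_countable[OF dg I(2) is_module_submod_rep[OF N C(1)] cnt is_submodule_inter[OF N D C(1)]]
    by blast
  have agree: "f k x = \<chi> k x" if "x \<in> D k" "x \<in> C k" for k x using \<chi>(2) that by simp
  obtain F where F: "is_hom G (submod_rep N (submod_sum D C)) I F" "\<And>k x. x \<in> D k \<Longrightarrow> F k x = f k x"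
    "\<And>k x. x \<in> C k \<Longrightarrow> F k x = \<chi> k x"
    using hom_glue[OF N I(1) D C(1) f \<chi>(1) agree] by blast
  show ?thesis
  proof (rule that[OF is_submodule_sum[OF N D C(1)] F(1)])
    show "D k \<subseteq> submod_sum D C k" for k by (rule submod_sum_supset(1)[OF N D C(1)])
    show "v \<in> submod_sum D C j" using submod_sum_supset(2)[OF N D C(1)] C(2) by blast
  qed (rule F(2))
qed

text \<open>Graphs of homomorphisms from submodules of \<open>N\<close> to \<open>I\<close> extending \<open>\<phi>\<close> on \<open>U\<close>, described by closure
  properties so that the union of a chain is again such a graph.\<close>

definition ext_graph :: "('i,'h) graph \<Rightarrow> ('i,'h,'v::ab_group_add) rep \<Rightarrow> ('i,'h,'w::ab_group_add) rep
    \<Rightarrow> ('i \<Rightarrow> 'v set) \<Rightarrow> ('i \<Rightarrow> 'v \<Rightarrow> 'w) \<Rightarrow> ('i \<times> 'v \<times> 'w) set \<Rightarrow> bool" where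
  "ext_graph G N I U \<phi> \<Gamma> \<longleftrightarrow>
    (\<forall>k x y. (k, x, y) \<in> \<Gamma> \<longrightarrow> x \<in> rsp N k \<and> y \<in> rsp I k) \<and>
    (\<forall>k x y y'. (k, x, y) \<in> \<Gamma> \<longrightarrow> (k, x, y') \<in> \<Gamma> \<longrightarrow> y = y') \<and>
    (\<forall>k x y x' y'. (k, x, y) \<in> \<Gamma> \<longrightarrow> (k, x', y') \<in> \<Gamma> \<longrightarrow> (k, x + x', y + y') \<in> \<Gamma>) \<and>
    (\<forall>k c x y. (k, x, y) \<in> \<Gamma> \<longrightarrow> (k, rsc N c x, rsc I c y) \<in> \<Gamma>) \<and>
    (\<forall>h x y. h \<in> garr G \<longrightarrow> (gsrc G h, x, y) \<in> \<Gamma> \<longrightarrow> (gtgt G h, rmap N h x, rmap I h y) \<in> \<Gamma>) \<and>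
    (\<forall>k x. x \<in> U k \<longrightarrow> (k, x, \<phi> k x) \<in> \<Gamma>)"

lemma ext_graphD:
  assumes "ext_graph G N I U \<phi> \<Gamma>"
  shows "(k, x, y) \<in> \<Gamma> \<Longrightarrow> x \<in> rsp N k \<and> y \<in> rsp I k"
    "(k, x, y) \<in> \<Gamma> \<Longrightarrow> (k, x, y') \<in> \<Gamma> \<Longrightarrow> y = y'"
    "(k, x, y) \<in> \<Gamma> \<Longrightarrow> (k, x', y') \<in> \<Gamma> \<Longrightarrow> (k, x + x', y + y') \<in> \<Gamma>"
    "(k, x, y) \<in> \<Gamma> \<Longrightarrow> (k, rsc N c x, rsc I c y) \<in> \<Gamma>"
    "h \<in> garr G \<Longrightarrow> (gsrc G h, x, y) \<in> \<Gamma> \<Longrightarrow> (gtgt G h, rmap N h x, rmap I h y) \<in> \<Gamma>"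
    "x \<in> U k \<Longrightarrow> (k, x, \<phi> k x) \<in> \<Gamma>"
proof -
  note A = assms[unfolded ext_graph_def]
  show "(k, x, y) \<in> \<Gamma> \<Longrightarrow> x \<in> rsp N k \<and> y \<in> rsp I k" using A by auto
  show "(k, x, y) \<in> \<Gamma> \<Longrightarrow> (k, x, y') \<in> \<Gamma> \<Longrightarrow> y = y'" using A by auto
  show "(k, x, y) \<in> \<Gamma> \<Longrightarrow> (k, x', y') \<in> \<Gamma> \<Longrightarrow> (k, x + x', y + y') \<in> \<Gamma>" using A by auto
  show "(k, x, y) \<in> \<Gamma> \<Longrightarrow> (k, rsc N c x, rsc I c y) \<in> \<Gamma>" using A by auto
  show "h \<in> garr G \<Longrightarrow> (gsrc G h, x, y) \<in> \<Gamma> \<Longrightarrow> (gtgt G h, rmap N h x, rmap I h y) \<in> \<Gamma>"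
    using A by auto
  show "x \<in> U k \<Longrightarrow> (k, x, \<phi> k x) \<in> \<Gamma>" using A by auto
qed

definition graph_of :: "('i \<Rightarrow> 'v set) \<Rightarrow> ('i \<Rightarrow> 'v \<Rightarrow> 'w) \<Rightarrow> ('i \<times> 'v \<times> 'w) set" where
  "graph_of D f = {(k, x, f k x) | k x. x \<in> D k}"

lemma ext_graph_graph_of:
  assumes N: "is_module G N" and D: "is_submodule G N D" and f: "is_hom G (submod_rep N D) I f"
    and U: "\<And>k. U k \<subseteq> D k" and agree: "\<And>k x. x \<in> U k \<Longrightarrow> f k x = \<phi> k x"
  shows "ext_graph G N I U \<phi> (graph_of D f)"
proof -
  interpret vector_space "rsc N" by (rule is_module_vector_space[OF N])
  have mem: "(k, x, y) \<in> graph_of D f \<longleftrightarrow> x \<in> D k \<and> y = f k x" for k x y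
    by (auto simp: graph_of_def)
  have "x + y \<in> D k" "rsc N c x \<in> D k" if "x \<in> D k" "y \<in> D k" for k c x y
    using that subspace_add subspace_scale is_submodule_subspace[OF D] by blast+
  moreover have "x \<in> rsp N k" if "x \<in> D k" for k x using that is_submodule_subset[OF D] by blast
  moreover have "rmap N h x \<in> D (gtgt G h)" if "h \<in> garr G" "x \<in> D (gsrc G h)" for h x
    using that is_submodule_arrow_into[OF D] by blast
  moreover have "x \<in> D k" if "x \<in> U k" for k x using that U by blast
  ultimately show ?thesis
    unfolding ext_graph_def mem
    using is_hom_into[OF f] is_hom_lin_on[OF f] is_hom_commutes[OF f] agree
    by (auto simp: lin_on_def)
qed

lemma ext_graph_Union:
  assumes "\<C> \<noteq> {}" and "subset.chain {\<Gamma>. ext_graph G N I U \<phi> \<Gamma>} \<C>"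
  shows "ext_graph G N I U \<phi> (\<Union>\<C>)"
proof -
  have mem: "\<And>\<Gamma>. \<Gamma> \<in> \<C> \<Longrightarrow> ext_graph G N I U \<phi> \<Gamma>" using assms(2) by (auto simp: subset_chain_def)
  have two: "\<exists>\<Gamma>\<in>\<C>. t \<in> \<Gamma> \<and> t' \<in> \<Gamma>" if "t \<in> \<Union>\<C>" "t' \<in> \<Union>\<C>" for t t'
    using that assms(2) unfolding subset_chain_def by blast
  show ?thesis
    unfolding ext_graph_def
  proof (intro conjI allI impI)
    fix k x y assume "(k, x, y) \<in> \<Union>\<C>"
    then obtain \<Gamma> where "\<Gamma> \<in> \<C>" "(k, x, y) \<in> \<Gamma>" by blast
    then show "x \<in> rsp N k" "y \<in> rsp I k" using ext_graphD(1)[OF mem] by simp_all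
  next
    fix k x y y' assume "(k, x, y) \<in> \<Union>\<C>" "(k, x, y') \<in> \<Union>\<C>"
    then obtain \<Gamma> where "\<Gamma> \<in> \<C>" "(k, x, y) \<in> \<Gamma>" "(k, x, y') \<in> \<Gamma>" using two by blast
    then show "y = y'" using ext_graphD(2)[OF mem] by simp
  next
    fix k x y x' y' assume "(k, x, y) \<in> \<Union>\<C>" "(k, x', y') \<in> \<Union>\<C>"
    then obtain \<Gamma> where "\<Gamma> \<in> \<C>" "(k, x, y) \<in> \<Gamma>" "(k, x', y') \<in> \<Gamma>" using two by blast
    then show "(k, x + x', y + y') \<in> \<Union>\<C>" using ext_graphD(3)[OF mem] by blast
  next
    fix k c x y assume "(k, x, y) \<in> \<Union>\<C>"
    then obtain \<Gamma> where "\<Gamma> \<in> \<C>" "(k, x, y) \<in> \<Gamma>" by blast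
    then show "(k, rsc N c x, rsc I c y) \<in> \<Union>\<C>" using ext_graphD(4)[OF mem] by blast
  next
    fix h x y assume "h \<in> garr G" "(gsrc G h, x, y) \<in> \<Union>\<C>"
    then obtain \<Gamma> where "\<Gamma> \<in> \<C>" "(gsrc G h, x, y) \<in> \<Gamma>" by blast
    then show "(gtgt G h, rmap N h x, rmap I h y) \<in> \<Union>\<C>" using ext_graphD(5)[OF mem] \<open>h \<in> garr G\<close> by blast
  next
    fix k x assume "x \<in> U k"
    moreover obtain \<Gamma> where "\<Gamma> \<in> \<C>" using assms(1) by blast
    ultimately show "(k, x, \<phi> k x) \<in> \<Union>\<C>" using ext_graphD(6)[OF mem] by blast
  qed
qed

lemma ext_graph_is_graph_of:
  assumes \<Gamma>: "ext_graph G N I U \<phi> \<Gamma>" and N: "is_module G N" and U: "is_submodule G N U"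
  obtains D f where "is_submodule G N D" "is_hom G (submod_rep N D) I f" "\<And>k. U k \<subseteq> D k"
    "\<And>k x. x \<in> U k \<Longrightarrow> f k x = \<phi> k x" "\<Gamma> = graph_of D f"
proof -
  interpret vector_space "rsc N" by (rule is_module_vector_space[OF N])
  note into = ext_graphD(1)[OF \<Gamma>] and unique = ext_graphD(2)[OF \<Gamma>] and \<Gamma>_add = ext_graphD(3)[OF \<Gamma>]
    and \<Gamma>_scale = ext_graphD(4)[OF \<Gamma>] and arrow = ext_graphD(5)[OF \<Gamma>] and extends = ext_graphD(6)[OF \<Gamma>]
  define D where "D k = {x. \<exists>y. (k, x, y) \<in> \<Gamma>}" for k
  define f where "f k x = (THE y. (k, x, y) \<in> \<Gamma>)" for k x
  have f_eq: "f k x = y" if "(k, x, y) \<in> \<Gamma>" for k x y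
    unfolding f_def by (rule the_equality[of "\<lambda>y. (k, x, y) \<in> \<Gamma>", OF that]) (rule unique[OF _ that])
  have D_I: "x \<in> D k" if "(k, x, y) \<in> \<Gamma>" for k x y using that by (auto simp: D_def)
  have in_\<Gamma>: "(k, x, f k x) \<in> \<Gamma>" if "x \<in> D k" for k x using that f_eq by (auto simp: D_def)
  have U_D: "U k \<subseteq> D k" for k using D_I extends by blast
  have "is_submodule G N D"
    unfolding is_submodule_def
  proof (intro conjI allI ballI)
    fix i
    show "subspace (D i)"
    proof (rule subspaceI)
      show "0 \<in> D i" using U_D subspace_0[OF is_submodule_subspace[OF U]] by blast
      show "x + y \<in> D i" if "x \<in> D i" "y \<in> D i" for x y
        using D_I[OF \<Gamma>_add[OF in_\<Gamma>[OF that(1)] in_\<Gamma>[OF that(2)]]] .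
      show "rsc N c x \<in> D i" if "x \<in> D i" for c x using D_I[OF \<Gamma>_scale[OF in_\<Gamma>[OF that]]] .
    qed
    show "D i \<subseteq> rsp N i" using into in_\<Gamma> by blast
  next
    fix h assume "h \<in> garr G"
    then show "rmap N h ` D (gsrc G h) \<subseteq> D (gtgt G h)" using D_I[OF arrow[OF _ in_\<Gamma>]] by blast
  qed
  moreover have "is_hom G (submod_rep N D) I f"
    unfolding is_hom_def lin_on_def rep_simps
  proof (intro conjI allI ballI)
    fix i x y assume "x \<in> D i" "y \<in> D i"
    then show "f i (x + y) = f i x + f i y" using f_eq[OF \<Gamma>_add[OF in_\<Gamma> in_\<Gamma>]] by blast
  next
    fix i c x assume "x \<in> D i"
    then show "f i (rsc N c x) = rsc I c (f i x)" using f_eq[OF \<Gamma>_scale[OF in_\<Gamma>]] by blast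
  next
    fix i show "f i ` D i \<subseteq> rsp I i" using into in_\<Gamma> by blast
  next
    fix h x assume "h \<in> garr G" "x \<in> D (gsrc G h)"
    then show "f (gtgt G h) (rmap N h x) = rmap I h (f (gsrc G h) x)" using f_eq[OF arrow[OF _ in_\<Gamma>]] by blast
  qed
  moreover have "\<Gamma> = graph_of D f"
    using in_\<Gamma> f_eq by (auto simp: graph_of_def D_def)
  ultimately show ?thesis using that U_D f_eq extends by blast
qed

lemma injective_extend:
  fixes G :: "('i::finite,'h) graph"
  assumes dg: "double_graph G" and N: "is_module G N" and I: "is_module G I" "is_injective G I"
    and U: "is_submodule G N U" and \<phi>: "is_hom G (submod_rep N U) I \<phi>"
  obtains \<psi> where "is_hom G N I \<psi>" "\<And>k x. x \<in> U k \<Longrightarrow> \<psi> k x = \<phi> k x"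
proof -
  have "\<exists>\<Gamma>\<in>{\<Gamma>. ext_graph G N I U \<phi> \<Gamma>}. \<forall>\<Gamma>'\<in>{\<Gamma>. ext_graph G N I U \<phi> \<Gamma>}. \<Gamma> \<subseteq> \<Gamma>' \<longrightarrow> \<Gamma>' = \<Gamma>"
  proof (rule subset_Zorn_nonempty)
    show "{\<Gamma>. ext_graph G N I U \<phi> \<Gamma>} \<noteq> {}" using ext_graph_graph_of[OF N U \<phi>] by blast
  qed (use ext_graph_Union in blast)
  then obtain \<Gamma> where \<Gamma>: "ext_graph G N I U \<phi> \<Gamma>"
    and max: "\<And>\<Gamma>'. ext_graph G N I U \<phi> \<Gamma>' \<Longrightarrow> \<Gamma> \<subseteq> \<Gamma>' \<Longrightarrow> \<Gamma>' = \<Gamma>" by blast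
  obtain D f where D: "is_submodule G N D" and f: "is_hom G (submod_rep N D) I f"
    and U_D: "\<And>k. U k \<subseteq> D k" and f_\<phi>: "\<And>k x. x \<in> U k \<Longrightarrow> f k x = \<phi> k x" and \<Gamma>_eq: "\<Gamma> = graph_of D f"
    using ext_graph_is_graph_of[OF \<Gamma> N U] by blast
  have "D k = rsp N k" for k
  proof (rule ccontr)
    assume "D k \<noteq> rsp N k"
    then obtain v where v: "v \<in> rsp N k" "v \<notin> D k" using is_submodule_subset[OF D] by blast
    obtain D' f' where D': "is_submodule G N D'" "is_hom G (submod_rep N D') I f'" "\<And>k. D k \<subseteq> D' k"
      "v \<in> D' k" "\<And>k x. x \<in> D k \<Longrightarrow> f' k x = f k x"
      using hom_extends_to_vector[OF dg N I D f v(1)] by blast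
    have "ext_graph G N I U \<phi> (graph_of D' f')"
    proof (rule ext_graph_graph_of[OF N D'(1,2)])
      show "U k \<subseteq> D' k" for k using U_D D'(3) by blast
      show "f' k x = \<phi> k x" if x: "x \<in> U k" for k x using D'(5)[OF subsetD[OF U_D x]] f_\<phi>[OF x] by simp
    qed
    moreover have "\<Gamma> \<subseteq> graph_of D' f'"
    proof
      fix t assume "t \<in> \<Gamma>"
      then obtain k x where "x \<in> D k" "t = (k, x, f k x)" unfolding \<Gamma>_eq graph_of_def by blast
      then have "x \<in> D' k" "t = (k, x, f' k x)" using D'(3,5) by auto
      then show "t \<in> graph_of D' f'" unfolding graph_of_def by blast
    qed
    ultimately have "graph_of D' f' = graph_of D f" using max \<Gamma>_eq by blast
    moreover have "(k, v, f' k v) \<in> graph_of D' f'" using D'(4) unfolding graph_of_def by blast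
    ultimately show False using v(2) unfolding graph_of_def by blast
  qed
  then have "D = rsp N" by blast
  then have "submod_rep N D = N" using rep_eta[of N] by simp
  then show ?thesis using that f f_\<phi> by simp
qed

section \<open>Socles\<close>

text \<open>The simple modules of the preprojective algebra are the \<open>s\<^sub>i\<close>, so the socle of a module
  consists of the vectors annihilated by all arrows.\<close>

definition socle :: "('i,'h) graph \<Rightarrow> ('i,'h,'v::ab_group_add) rep \<Rightarrow> 'i \<Rightarrow> 'v set" where
  "socle G M k = {x \<in> rsp M k. \<forall>h\<in>garr G. gsrc G h = k \<longrightarrow> rmap M h x = 0}"

definition socle_essential :: "('i::finite,'h) graph \<Rightarrow> ('i,'h,'v::ab_group_add) rep \<Rightarrow> bool" where
  "socle_essential G M \<longleftrightarrow> (\<forall>U. is_submodule G M U \<longrightarrow> (\<exists>i. U i \<noteq> {0}) \<longrightarrow>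
     (\<exists>i. \<exists>x\<in>U i. x \<noteq> 0 \<and> x \<in> socle G M i))"

lemma zero_in_socle:
  assumes "is_module G M"
  shows "0 \<in> socle G M k"
proof -
  interpret vector_space "rsc M" by (rule is_module_vector_space[OF assms])
  show ?thesis using subspace_0[OF is_module_subspace[OF assms]] is_module_arrow_zero[OF assms] by (simp add: socle_def)
qed

lemma is_submodule_socle:
  assumes M: "is_module G M"
  shows "is_submodule G M (socle G M)"
  unfolding is_submodule_def
proof (intro conjI allI ballI)
  interpret vector_space "rsc M" by (rule is_module_vector_space[OF M])
  fix i
  have sub: "subspace (rsp M i)" by (rule is_module_subspace[OF M])
  show "subspace (socle G M i)"
  proof (rule subspaceI)
    show "0 \<in> socle G M i" by (rule zero_in_socle[OF M])
  next
    fix x y assume "x \<in> socle G M i" "y \<in> socle G M i"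
    then show "x + y \<in> socle G M i"
      using subspace_add[OF sub] is_module_arrow_lin[OF M] by (auto simp: socle_def lin_on_def)
  next
    fix c x assume "x \<in> socle G M i"
    then show "rsc M c x \<in> socle G M i"
      using subspace_scale[OF sub] is_module_arrow_lin[OF M] by (auto simp: socle_def lin_on_def)
  qed
  show "socle G M i \<subseteq> rsp M i" by (auto simp: socle_def)
next
  fix h assume h: "h \<in> garr G"
  have "0 \<in> socle G M (gtgt G h)" by (rule zero_in_socle[OF M])
  then show "rmap M h ` socle G M (gsrc G h) \<subseteq> socle G M (gtgt G h)"
    using h by (auto simp: socle_def)
qed

lemma is_hom_socle_endo:
  assumes M: "is_module G M" and \<tau>: "\<And>k. lin_on (rsc M) (rsc M) (socle G M k) (\<tau> k)"
    "\<And>k. \<tau> k ` socle G M k \<subseteq> socle G M k"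
  shows "is_hom G (submod_rep M (socle G M)) M \<tau>"
  unfolding is_hom_def rep_simps
proof (intro conjI allI ballI)
  fix i
  show "lin_on (rsc M) (rsc M) (socle G M i) (\<tau> i)" by (rule \<tau>(1))
  show "\<tau> i ` socle G M i \<subseteq> rsp M i" using \<tau>(2) by (auto simp: socle_def)
next
  fix h x assume h: "h \<in> garr G" and x: "x \<in> socle G M (gsrc G h)"
  have "\<tau> (gtgt G h) 0 = 0"
    by (rule lin_on_zero[OF is_module_vector_space[OF M] is_submodule_subspace[OF is_submodule_socle[OF M]] \<tau>(1)])
  then show "\<tau> (gtgt G h) (rmap M h x) = rmap M h (\<tau> (gsrc G h) x)"
    using x \<tau>(2) h by (auto simp: socle_def)
qed

lemma inj_hom_socle_image:
  assumes M: "is_module G M" and N: "is_module G N" and Y: "is_submodule G M Y"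
    and \<theta>: "is_hom G (submod_rep M Y) N \<theta>" and inj: "\<And>k. inj_on (\<theta> k) (Y k)"
  shows "\<theta> k ` (Y k \<inter> socle G M k) = \<theta> k ` Y k \<inter> socle G N k"
proof -
  interpret vector_space "rsc M" by (rule is_module_vector_space[OF M])
  have "lin_on (rsc M) (rsc N) (Y j) (\<theta> j)" for j using is_hom_lin_on[OF \<theta>] by simp
  then have \<theta>0: "\<theta> j 0 = 0" and Y0: "0 \<in> Y j" for j
    using lin_on_zero[OF vector_space_axioms is_submodule_subspace[OF Y]] subspace_0[OF is_submodule_subspace[OF Y]]
    by auto
  have arrow: "rmap N h (\<theta> k y) = \<theta> (gtgt G h) (rmap M h y)" if "h \<in> garr G" "gsrc G h = k" "y \<in> Y k" for h y
    using is_hom_commutes[OF \<theta>] that by auto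
  have Y_arrow: "rmap M h y \<in> Y (gtgt G h)" if "h \<in> garr G" "gsrc G h = k" "y \<in> Y k" for h y
    using is_submodule_arrow_into[OF Y] that by blast
  have "\<theta> k y \<in> socle G N k \<longleftrightarrow> y \<in> socle G M k" if y: "y \<in> Y k" for y
  proof -
    have "rmap N h (\<theta> k y) = 0 \<longleftrightarrow> rmap M h y = 0" if "h \<in> garr G" "gsrc G h = k" for h
      using arrow[OF that y] inj_onD[OF inj _ Y_arrow[OF that y] Y0] \<theta>0 by auto
    moreover have "\<theta> k y \<in> rsp N k" "y \<in> rsp M k"
      using is_hom_into[OF \<theta>] is_submodule_subset[OF Y] y by auto
    ultimately show ?thesis by (auto simp: socle_def)
  qed
  then show ?thesis by blast
qed

lemma inj_if_inj_on_socle: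
  assumes M: "is_module G M" and N: "is_module G N" and ess: "socle_essential G M"
    and g: "is_hom G M N g" and inj: "\<And>k. inj_on (g k) (socle G M k)"
  shows "inj_on (g k) (rsp M k)"
proof (rule inj_on_if_lin_on_kernel_trivial[OF is_module_vector_space[OF M] is_module_subspace[OF M] is_hom_lin_on[OF g]])
  let ?K = "\<lambda>k. {x \<in> rsp M k. g k x = 0}"
  have "g j 0 = 0" for j
    by (rule lin_on_zero[OF is_module_vector_space[OF M] is_module_subspace[OF M] is_hom_lin_on[OF g]])
  then have "x = 0" if "x \<in> ?K j" "x \<in> socle G M j" for j x
    using inj_onD[OF inj _ that(2) zero_in_socle[OF M]] that(1) by simp
  then have "?K j = {0}" for j
    using ess is_submodule_hom_kernel[OF M N g] unfolding socle_essential_def by blast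
  then show "x = 0" if "x \<in> rsp M k" "g k x = 0" for x using that by blast
qed

text \<open>A left inverse of \<open>g\<close>, obtained from injectivity, is again injective on the socle, hence
  injective, which forces \<open>g\<close> to be onto.\<close>

lemma iso_if_bij_on_socle:
  fixes G :: "('i::finite,'h) graph"
  assumes dg: "double_graph G" and M: "is_module G M" "is_injective G M" and ess: "socle_essential G M"
    and g: "is_hom G M M g" and bij: "\<And>k. bij_betw (g k) (socle G M k) (socle G M k)"
  shows "is_iso G M M g"
proof -
  have inj: "inj_on (g k) (rsp M k)" for k
    using inj_if_inj_on_socle[OF M(1) M(1) ess g] bij by (simp add: bij_betw_def)
  then have "is_mono G M M g" using g by (simp add: is_mono_def)
  have img: "is_submodule G M (\<lambda>k. g k ` rsp M k)" by (rule is_submodule_hom_image[OF M(1) M(1) g])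
  obtain l where l: "is_hom G M M l" "\<And>k y. y \<in> g k ` rsp M k \<Longrightarrow> l k y = inv_into (rsp M k) (g k) y"
    using injective_extend[OF dg M(1) M img is_hom_inv[OF M(1) is_iso_onto_image[OF \<open>is_mono G M M g\<close>]]]
    by blast
  have lg: "l k (g k x) = x" if "x \<in> rsp M k" for k x using l(2) inj that by (simp add: inv_into_f_f)
  have "inj_on (l k) (socle G M k)" for k
  proof (rule inj_onI)
    fix y z assume "y \<in> socle G M k" "z \<in> socle G M k" "l k y = l k z"
    moreover have "y \<in> g k ` socle G M k" "z \<in> g k ` socle G M k"
      using bij_betw_imp_surj_on[OF bij[of k]] calculation(1,2) by blast+
    then obtain y' z' where y'z': "y' \<in> rsp M k" "z' \<in> rsp M k" "y = g k y'" "z = g k z'"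
      by (auto simp: socle_def)
    then have "y' = z'" using lg \<open>l k y = l k z\<close> by metis
    then show "y = z" using y'z' by simp
  qed
  then have inj_l: "inj_on (l k) (rsp M k)" for k by (rule inj_if_inj_on_socle[OF M(1) M(1) ess l(1)])
  have "y \<in> g k ` rsp M k" if y: "y \<in> rsp M k" for k y
  proof -
    have "l k y \<in> rsp M k" "g k (l k y) \<in> rsp M k" using is_hom_into[OF l(1)] is_hom_into[OF g] y by blast+
    then have "y = g k (l k y)" using inj_onD[OF inj_l _ y] lg by simp
    then show ?thesis using \<open>l k y \<in> rsp M k\<close> by blast
  qed
  then have "g k ` rsp M k = rsp M k" for k using is_hom_into[OF g] by blast
  then show ?thesis using g inj by (simp add: is_iso_def bij_betw_def)
qed

lemma socle_automorphisms_extending: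
  assumes E: "is_module G E" and Y: "is_submodule G E Y"
    and \<theta>: "is_hom G (submod_rep E Y) E \<theta>" "\<And>j. inj_on (\<theta> j) (Y j)"
    and fin: "\<And>k. \<exists>T. finite T \<and> socle G E k \<subseteq> module.span (rsc E) T"
  obtains \<tau> where "is_hom G (submod_rep E (socle G E)) E \<tau>" "\<And>k. bij_betw (\<tau> k) (socle G E k) (socle G E k)"
    "\<And>k x. x \<in> Y k \<Longrightarrow> x \<in> socle G E k \<Longrightarrow> \<tau> k x = \<theta> k x"
proof -
  interpret vector_space "rsc E" by (rule is_module_vector_space[OF E])
  have "\<exists>\<tau>. lin_on (rsc E) (rsc E) (socle G E k) \<tau> \<and> bij_betw \<tau> (socle G E k) (socle G E k)
      \<and> (\<forall>x \<in> Y k \<inter> socle G E k. \<tau> x = \<theta> k x)" for k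
  proof -
    obtain T where T: "finite T" "socle G E k \<subseteq> span T" using fin by blast
    have sub: "subspace (socle G E j)" for j by (rule is_submodule_subspace[OF is_submodule_socle[OF E]])
    have img: "\<theta> k ` (Y k \<inter> socle G E k) \<subseteq> socle G E k"
      using inj_hom_socle_image[OF E E Y \<theta>] by blast
    have inj: "inj_on (\<theta> k) (Y k \<inter> socle G E k)" using inj_on_subset[OF \<theta>(2)] by simp
    have sub_A: "subspace (Y k \<inter> socle G E k)"
      using subspace_inter[OF is_submodule_subspace[OF Y] sub] .
    have lin: "lin_on (rsc E) (rsc E) (Y k \<inter> socle G E k) (\<theta> k)"
      using lin_on_subset[OF is_hom_lin_on[OF \<theta>(1)]] by simp
    obtain \<tau> where "lin_on (rsc E) (rsc E) (socle G E k) \<tau>" "bij_betw \<tau> (socle G E k) (socle G E k)"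
      "\<And>x. x \<in> Y k \<inter> socle G E k \<Longrightarrow> \<tau> x = \<theta> k x"
      using lin_inj_extends_to_automorphism[OF vector_space_axioms sub T sub_A Int_lower2 lin inj img] by blast
    then show ?thesis by blast
  qed
  then obtain \<tau> where \<tau>: "\<forall>k. lin_on (rsc E) (rsc E) (socle G E k) (\<tau> k)
      \<and> bij_betw (\<tau> k) (socle G E k) (socle G E k) \<and> (\<forall>x \<in> Y k \<inter> socle G E k. \<tau> k x = \<theta> k x)"
    by (rule choice[THEN exE, OF allI])
  have "is_hom G (submod_rep E (socle G E)) E \<tau>"
    using is_hom_socle_endo[OF E] \<tau> by (simp add: bij_betw_def)
  then show ?thesis using that \<tau> by simp
qed

theorem monos_differ_by_automorphism:
  fixes G :: "('i::finite,'h) graph"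
  assumes dg: "double_graph G" and X: "is_module G X" and E: "is_module G E" "is_injective G E"
    and ess: "socle_essential G E" and fin: "\<And>k. \<exists>T. finite T \<and> socle G E k \<subseteq> module.span (rsc E) T"
    and f1: "is_mono G X E f1" and f2: "is_mono G X E f2"
  shows "\<exists>g. is_iso G E E g \<and> (\<forall>i. \<forall>v\<in>rsp X i. f2 i v = g i (f1 i v))"
proof -
  define Y where "Y k = f1 k ` rsp X k" for k
  define S where "S = socle G E"
  obtain \<theta> where \<theta>: "is_hom G (submod_rep E Y) E \<theta>" "\<And>k. bij_betw (\<theta> k) (Y k) (f2 k ` rsp X k)"
    "\<And>k x. x \<in> rsp X k \<Longrightarrow> \<theta> k (f1 k x) = f2 k x"
    using mono_image_iso[OF X f1 f2] unfolding Y_def by blast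
  have Y: "is_submodule G E Y"
    unfolding Y_def using is_submodule_hom_image[OF X E(1)] f1 by (auto simp: is_mono_def)
  have S: "is_submodule G E S" unfolding S_def by (rule is_submodule_socle[OF E(1)])
  have "inj_on (\<theta> k) (Y k)" for k using \<theta>(2) by (simp add: bij_betw_def)
  then obtain \<tau> where \<tau>: "is_hom G (submod_rep E S) E \<tau>" "\<And>k. bij_betw (\<tau> k) (S k) (S k)"
    "\<And>k x. x \<in> Y k \<Longrightarrow> x \<in> S k \<Longrightarrow> \<tau> k x = \<theta> k x"
    using socle_automorphisms_extending[OF E(1) Y \<theta>(1) _ fin] unfolding S_def by blast
  obtain F where F: "is_hom G (submod_rep E (submod_sum Y S)) E F"
    "\<And>k x. x \<in> Y k \<Longrightarrow> F k x = \<theta> k x" "\<And>k x. x \<in> S k \<Longrightarrow> F k x = \<tau> k x"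
    using hom_glue[OF E(1) E(1) Y S \<theta>(1) \<tau>(1)] \<tau>(3) by (metis (no_types))
  obtain g where g: "is_hom G E E g" "\<And>k x. x \<in> submod_sum Y S k \<Longrightarrow> g k x = F k x"
    using injective_extend[OF dg E(1) E is_submodule_sum[OF E(1) Y S] F(1)] by blast
  have "g k x = \<tau> k x" if x: "x \<in> S k" for k x
    using g(2)[OF subsetD[OF submod_sum_supset(2)[OF E(1) Y S] x]] F(3)[OF x] by simp
  then have "bij_betw (g k) (S k) (S k)" for k using \<tau>(2) bij_betw_cong[of "S k" "g k" "\<tau> k"] by simp
  then have "is_iso G E E g" using iso_if_bij_on_socle[OF dg E ess g(1)] unfolding S_def by blast
  moreover have "f2 i v = g i (f1 i v)" if "v \<in> rsp X i" for i v
  proof -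
    have "f1 i v \<in> Y i" using that by (simp add: Y_def)
    then show ?thesis
      using g(2)[OF subsetD[OF submod_sum_supset(1)[OF E(1) Y S]]] F(2) \<theta>(3)[OF that] by simp
  qed
  ultimately show ?thesis by blast
qed

section \<open>Injective hulls of simple modules and their sums\<close>

lemma simple_mod_simps:
  "rsc (simple_mod i) = (*)" "rsp (simple_mod i) k = (if k = i then UNIV else {0})"
  "rmap (simple_mod i) h v = 0"
  by (simp_all add: simple_mod_def)

lemma socle_line_submodule:
  assumes M: "is_module G M" and x: "x \<in> socle G M k"
  shows "is_submodule G M (\<lambda>j. if j = k then range (\<lambda>c. rsc M c x) else {0})"
  unfolding is_submodule_def
proof (intro conjI allI ballI)
  interpret vector_space "rsc M" by (rule is_module_vector_space[OF M])
  have x_M: "x \<in> rsp M k" using x by (simp add: socle_def)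
  fix j
  show "subspace (if j = k then range (\<lambda>c. rsc M c x) else {0})"
    using span_singleton[of x] subspace_span[of "{x}"] by auto
  show "(if j = k then range (\<lambda>c. rsc M c x) else {0}) \<subseteq> rsp M j"
    using subspace_scale[OF is_module_subspace[OF M] x_M] subspace_0[OF is_module_subspace[OF M]] by auto
next
  interpret vector_space "rsc M" by (rule is_module_vector_space[OF M])
  fix h assume h: "h \<in> garr G"
  have "0 \<in> range (\<lambda>c. rsc M c x)" by (metis rangeI scale_zero_left)
  then have zero: "0 \<in> (if gtgt G h = k then range (\<lambda>c. rsc M c x) else {0})" by simp
  show "rmap M h ` (if gsrc G h = k then range (\<lambda>c. rsc M c x) else {0})
      \<subseteq> (if gtgt G h = k then range (\<lambda>c. rsc M c x) else {0})"
  proof (cases "gsrc G h = k")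
    case True
    have "rmap M h (rsc M c x) = 0" for c
      using is_module_arrow_lin[OF M h] x True h by (auto simp: lin_on_def socle_def)
    then show ?thesis using True zero by auto
  next
    case False
    then show ?thesis using is_module_arrow_zero[OF M h] zero by auto
  qed
qed

context
  fixes G :: "('i::finite,'h) graph" and Q :: "('i,'h,'q::ab_group_add) rep" and \<iota> :: "'i \<Rightarrow> complex \<Rightarrow> 'q"
    and i :: 'i
  assumes hull: "is_injective_hull G (simple_mod i) Q \<iota>"
begin

lemma hull_module: "is_module G Q"
  using hull by (simp add: is_injective_hull_def)

lemma hull_embedding: "is_hom G (simple_mod i) Q \<iota>"
  using hull by (simp add: is_injective_hull_def is_mono_def)

lemma hull_embedding_scale: "\<iota> i (c * z) = rsc Q c (\<iota> i z)"
  using is_hom_lin_on[OF hull_embedding, of i] by (simp add: lin_on_def simple_mod_simps)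

lemma hull_embedding_zero: "\<iota> k 0 = 0"
proof -
  have "(0::complex) \<in> rsp (simple_mod i :: ('i,'h,complex) rep) k" by (simp add: simple_mod_simps)
  then have "\<iota> k (0 + 0) = \<iota> k 0 + \<iota> k 0"
    using is_hom_lin_on[OF hull_embedding, of k] unfolding lin_on_def by blast
  then show ?thesis by simp
qed

lemma hull_embedding_in_socle:
  assumes "z \<in> rsp (simple_mod i :: ('i,'h,complex) rep) k"
  shows "\<iota> k z \<in> socle G Q k"
proof -
  have "rmap Q h (\<iota> k z) = 0" if "h \<in> garr G" "gsrc G h = k" for h
    using is_hom_commutes[OF hull_embedding that(1), of z] assms that(2)
    by (simp add: simple_mod_simps hull_embedding_zero)
  then show ?thesis using is_hom_into[OF hull_embedding assms] by (simp add: socle_def)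
qed

text \<open>A nonzero socle vector spans a submodule, which must meet the essential image of \<open>s\<^sub>i\<close>.\<close>

lemma hull_socle:
  assumes x: "x \<in> socle G Q k"
  shows "x = 0 \<or> (k = i \<and> (\<exists>c. x = \<iota> i c))"
proof (cases "x = 0")
  case False
  define U where "U j = (if j = k then range (\<lambda>c. rsc Q c x) else {0})" for j
  interpret vector_space "rsc Q" by (rule is_module_vector_space[OF hull_module])
  have "is_submodule G Q U" unfolding U_def by (rule socle_line_submodule[OF hull_module x])
  moreover have "x \<in> U k" unfolding U_def by (metis rangeI scale_one)
  then have "U k \<noteq> {0}" using False by blast
  ultimately obtain j w where w: "w \<in> U j" "w \<noteq> 0" "w \<in> \<iota> j ` rsp (simple_mod i :: ('i,'h,complex) rep) j"
    using hull unfolding is_injective_hull_def by blast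
  have "j = k" using w(1,2) unfolding U_def by (cases "j = k") auto
  obtain c where c: "w = rsc Q c x" using w(1) \<open>j = k\<close> unfolding U_def by auto
  obtain z where z: "z \<in> rsp (simple_mod i :: ('i,'h,complex) rep) k" "w = \<iota> k z"
    using w(3) \<open>j = k\<close> by blast
  have "k = i"
  proof (rule ccontr)
    assume "k \<noteq> i"
    then have "z = 0" using z(1) by (simp add: simple_mod_simps)
    then show False using z(2) w(2) hull_embedding_zero by simp
  qed
  moreover have "c \<noteq> 0" using c w(2) by auto
  then have "x = rsc Q (inverse c) w" using c by simp
  then have "x = \<iota> i (inverse c * z)" using z(2) \<open>k = i\<close> hull_embedding_scale by simp
  ultimately show ?thesis by blast
qed simp

end

locale injective_hull_sum =
  fixes G :: "('i::finite,'h) graph" and Q :: "'i \<Rightarrow> ('i,'h,'q::ab_group_add) rep"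
    and \<iota> :: "'i \<Rightarrow> 'i \<Rightarrow> complex \<Rightarrow> 'q" and a :: "'i \<Rightarrow> nat"
  assumes hull: "\<And>i. is_injective_hull G (simple_mod i) (Q i) (\<iota> i)"
begin

abbreviation E where "E \<equiv> dsum_mod Q a"

lemma module_Q: "is_module G (Q i)"
  by (rule hull_module[OF hull])

lemma injective_Q: "is_injective G (Q i)"
  using hull by (simp add: is_injective_hull_def)

lemma module_rsc_Q: "module (rsc (Q i))"
  using is_module_vector_space[OF module_Q] by (simp add: module_iff_vector_space)

lemma Q_zero: "0 \<in> rsp (Q i) k"
  using module.subspace_0[OF module_rsc_Q is_module_subspace[OF module_Q]] .

lemma Q_scale_zero: "rsc (Q i) c 0 = 0"
  using module.scale_zero_right[OF module_rsc_Q] .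

lemma dsum_simps:
  "rsc E c \<phi> = (\<lambda>p. rsc (Q (fst p)) c (\<phi> p))"
  "rmap E h \<phi> = (\<lambda>p. if snd p < a (fst p) then rmap (Q (fst p)) h (\<phi> p) else 0)"
  by (simp_all add: dsum_mod_def)

lemma dsum_rsp_iff: "\<phi> \<in> rsp E j \<longleftrightarrow>
    (\<forall>p. (snd p < a (fst p) \<longrightarrow> \<phi> p \<in> rsp (Q (fst p)) j) \<and> (\<not> snd p < a (fst p) \<longrightarrow> \<phi> p = 0))"
  by (simp add: dsum_mod_def)

lemma dsum_mem: "\<phi> \<in> rsp E j \<Longrightarrow>
    (snd p < a (fst p) \<longrightarrow> \<phi> p \<in> rsp (Q (fst p)) j) \<and> (\<not> snd p < a (fst p) \<longrightarrow> \<phi> p = 0)"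
  unfolding dsum_rsp_iff by (rule spec)

lemma dsum_val: "\<phi> \<in> rsp E j \<Longrightarrow> snd p < a (fst p) \<Longrightarrow> \<phi> p \<in> rsp (Q (fst p)) j"
  using dsum_mem by blast

lemma dsum_inval: "\<phi> \<in> rsp E j \<Longrightarrow> \<not> snd p < a (fst p) \<Longrightarrow> \<phi> p = 0"
  using dsum_mem by blast

lemma vector_space_dsum: "vector_space (rsc E)"
  by unfold_locales (simp_all add: dsum_simps fun_eq_iff module.scale_right_distrib[OF module_rsc_Q]
      module.scale_left_distrib[OF module_rsc_Q] module.scale_scale[OF module_rsc_Q] module.scale_one[OF module_rsc_Q])

lemma dsum_subspace: "module.subspace (rsc E) (rsp E j)"
proof (rule module.subspaceI)
  show "module (rsc E)" using vector_space_dsum by (simp add: module_iff_vector_space)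
next
  show "0 \<in> rsp E j" by (simp add: dsum_rsp_iff Q_zero)
next
  fix x y assume "x \<in> rsp E j" "y \<in> rsp E j"
  then show "x + y \<in> rsp E j"
    by (auto simp: dsum_rsp_iff intro!: module.subspace_add[OF module_rsc_Q is_module_subspace[OF module_Q]])
next
  fix c x assume "x \<in> rsp E j"
  then show "rsc E c x \<in> rsp E j"
    by (auto simp: dsum_rsp_iff dsum_simps Q_scale_zero
        intro!: module.subspace_scale[OF module_rsc_Q is_module_subspace[OF module_Q]])
qed

lemma dsum_arrow_into:
  assumes h: "h \<in> garr G"
  shows "rmap E h ` rsp E (gsrc G h) \<subseteq> rsp E (gtgt G h)"
proof
  fix y assume "y \<in> rmap E h ` rsp E (gsrc G h)"
  then obtain x where x: "x \<in> rsp E (gsrc G h)" "y = rmap E h x" by blast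
  have "rmap (Q (fst p)) h (x p) \<in> rsp (Q (fst p)) (gtgt G h)" if "snd p < a (fst p)" for p
    using is_module_arrow_into[OF module_Q h] dsum_val[OF x(1) that] by blast
  then show "y \<in> rsp E (gtgt G h)" unfolding dsum_rsp_iff x(2) dsum_simps by simp
qed

lemma dsum_arrow_lin:
  assumes h: "h \<in> garr G"
  shows "lin_on (rsc E) (rsc E) (rsp E (gsrc G h)) (rmap E h)"
  unfolding lin_on_def
proof (intro conjI ballI allI)
  fix x y assume x: "x \<in> rsp E (gsrc G h)" and y: "y \<in> rsp E (gsrc G h)"
  show "rmap E h (x + y) = rmap E h x + rmap E h y"
  proof
    fix p
    have "rmap (Q (fst p)) h (x p + y p) = rmap (Q (fst p)) h (x p) + rmap (Q (fst p)) h (y p)"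
      if valid: "snd p < a (fst p)"
      using is_module_arrow_lin[OF module_Q h] dsum_val[OF x valid] dsum_val[OF y valid]
      unfolding lin_on_def by blast
    then show "rmap E h (x + y) p = (rmap E h x + rmap E h y) p" by (simp add: dsum_simps)
  qed
next
  fix c x assume x: "x \<in> rsp E (gsrc G h)"
  show "rmap E h (rsc E c x) = rsc E c (rmap E h x)"
  proof
    fix p
    have "rmap (Q (fst p)) h (rsc (Q (fst p)) c (x p)) = rsc (Q (fst p)) c (rmap (Q (fst p)) h (x p))"
      if valid: "snd p < a (fst p)"
      using is_module_arrow_lin[OF module_Q h] dsum_val[OF x valid] unfolding lin_on_def by blast
    then show "rmap E h (rsc E c x) p = rsc E c (rmap E h x) p" by (simp add: dsum_simps Q_scale_zero)
  qed
qed

lemma dsum_preproj_rel: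
  assumes v: "v \<in> rsp E i"
  shows "(\<Sum>h\<in>{h\<in>garr G. gtgt G h = i}. rsc E (geps G h) (rmap E h (rmap E (gbar G h) v))) = 0"
proof
  fix p
  show "(\<Sum>h\<in>{h\<in>garr G. gtgt G h = i}. rsc E (geps G h) (rmap E h (rmap E (gbar G h) v))) p = 0 p"
  proof (cases "snd p < a (fst p)")
    case True
    then show ?thesis
      unfolding sum_fun_apply using is_module_preproj_rel[OF module_Q dsum_val[OF v True]]
      by (simp add: dsum_simps)
  next
    case False
    then show ?thesis unfolding sum_fun_apply by (simp add: dsum_simps Q_scale_zero)
  qed
qed

lemma is_module_dsum: "is_module G E"
  unfolding is_module_def
proof (intro conjI allI ballI)
  show "vector_space (rsc E)" by (rule vector_space_dsum)
  show "module.subspace (rsc E) (rsp E i)" for i by (rule dsum_subspace)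
  show "rmap E h ` rsp E (gsrc G h) \<subseteq> rsp E (gtgt G h)" if "h \<in> garr G" for h
    by (rule dsum_arrow_into[OF that])
  show "lin_on (rsc E) (rsc E) (rsp E (gsrc G h)) (rmap E h)" if "h \<in> garr G" for h
    by (rule dsum_arrow_lin[OF that])
  show "(\<Sum>h\<in>{h\<in>garr G. gtgt G h = i}. rsc E (geps G h) (rmap E h (rmap E (gbar G h) v))) = 0"
    if "v \<in> rsp E i" for i v
    by (rule dsum_preproj_rel[OF that])
qed

lemma is_hom_dsum_component:
  assumes f: "is_hom G M E f" and p: "snd p < a (fst p)"
  shows "is_hom G M (Q (fst p)) (\<lambda>k x. f k x p)"
  unfolding is_hom_def
proof (intro conjI allI ballI)
  fix i
  show "lin_on (rsc M) (rsc (Q (fst p))) (rsp M i) (\<lambda>x. f i x p)"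
    using is_hom_lin_on[OF f, of i] by (simp add: lin_on_def dsum_simps)
  show "(\<lambda>x. f i x p) ` rsp M i \<subseteq> rsp (Q (fst p)) i" using dsum_val[OF is_hom_into[OF f] p] by blast
next
  fix h x assume "h \<in> garr G" "x \<in> rsp M (gsrc G h)"
  then show "f (gtgt G h) (rmap M h x) p = rmap (Q (fst p)) h (f (gsrc G h) x p)"
    using is_hom_commutes[OF f] p by (simp add: dsum_simps)
qed

lemma is_hom_dsum_of_components:
  assumes \<psi>: "\<And>p. snd p < a (fst p) \<Longrightarrow> is_hom G M (Q (fst p)) (\<psi> p)"
  shows "is_hom G M E (\<lambda>k x p. if snd p < a (fst p) then \<psi> p k x else 0)"
  unfolding is_hom_def
proof (intro conjI allI ballI)
  fix i
  show "lin_on (rsc M) (rsc E) (rsp M i) (\<lambda>x p. if snd p < a (fst p) then \<psi> p i x else 0)"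
    unfolding lin_on_def
  proof (intro conjI ballI allI)
    fix x y assume "x \<in> rsp M i" "y \<in> rsp M i"
    then have "\<psi> p i (x + y) = \<psi> p i x + \<psi> p i y" if valid: "snd p < a (fst p)" for p
      using is_hom_lin_on[OF \<psi>[OF valid], of i] unfolding lin_on_def by blast
    then show "(\<lambda>p. if snd p < a (fst p) then \<psi> p i (x + y) else 0)
        = (\<lambda>p. if snd p < a (fst p) then \<psi> p i x else 0) + (\<lambda>p. if snd p < a (fst p) then \<psi> p i y else 0)"
      by (intro ext) simp
  next
    fix c x assume "x \<in> rsp M i"
    then have "\<psi> p i (rsc M c x) = rsc (Q (fst p)) c (\<psi> p i x)" if valid: "snd p < a (fst p)" for p
      using is_hom_lin_on[OF \<psi>[OF valid], of i] unfolding lin_on_def by blast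
    then show "(\<lambda>p. if snd p < a (fst p) then \<psi> p i (rsc M c x) else 0)
        = rsc E c (\<lambda>p. if snd p < a (fst p) then \<psi> p i x else 0)"
      by (intro ext) (simp add: dsum_simps Q_scale_zero)
  qed
  show "(\<lambda>x p. if snd p < a (fst p) then \<psi> p i x else 0) ` rsp M i \<subseteq> rsp E i"
  proof
    fix y assume "y \<in> (\<lambda>x p. if snd p < a (fst p) then \<psi> p i x else 0) ` rsp M i"
    then obtain x where x: "x \<in> rsp M i" "y = (\<lambda>p. if snd p < a (fst p) then \<psi> p i x else 0)" by blast
    show "y \<in> rsp E i"
      unfolding dsum_rsp_iff
    proof (intro allI conjI impI)
      fix p assume "snd p < a (fst p)"
      then show "y p \<in> rsp (Q (fst p)) i" using is_hom_into[OF \<psi> x(1)] x(2) by simp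
    qed (simp add: x(2))
  qed
next
  fix h x assume h: "h \<in> garr G" and x: "x \<in> rsp M (gsrc G h)"
  show "(\<lambda>p. if snd p < a (fst p) then \<psi> p (gtgt G h) (rmap M h x) else 0)
      = rmap E h (\<lambda>p. if snd p < a (fst p) then \<psi> p (gsrc G h) x else 0)"
  proof
    fix p
    show "(if snd p < a (fst p) then \<psi> p (gtgt G h) (rmap M h x) else 0)
        = rmap E h (\<lambda>p. if snd p < a (fst p) then \<psi> p (gsrc G h) x else 0) p"
      using is_hom_commutes[OF \<psi> h x] by (simp add: dsum_simps)
  qed
qed

lemma is_injective_dsum: "is_injective G E"
  unfolding is_injective_def
proof (intro allI impI)
  fix M N :: "('i,'h,nat \<Rightarrow> complex) rep" and u \<phi>
  assume M: "rsc M = fun_sc" "is_module G M" and N: "rsc N = fun_sc" "is_module G N"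
    and u: "is_mono G M N u" and \<phi>: "is_hom G M E \<phi>"
  have "\<forall>p. \<exists>\<psi>. snd p < a (fst p) \<longrightarrow>
      is_hom G N (Q (fst p)) \<psi> \<and> (\<forall>i. \<forall>v\<in>rsp M i. \<psi> i (u i v) = \<phi> i v p)"
  proof
    fix p
    show "\<exists>\<psi>. snd p < a (fst p) \<longrightarrow> is_hom G N (Q (fst p)) \<psi> \<and> (\<forall>i. \<forall>v\<in>rsp M i. \<psi> i (u i v) = \<phi> i v p)"
    proof (cases "snd p < a (fst p)")
      case True
      obtain \<psi> where "is_hom G N (Q (fst p)) \<psi>" "\<And>i v. v \<in> rsp M i \<Longrightarrow> \<psi> i (u i v) = \<phi> i v p"
        using is_injectiveD[OF injective_Q M(1) N(1) M(2) N(2) u is_hom_dsum_component[OF \<phi> True]] by metis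
      then show ?thesis by (intro exI[of _ \<psi>]) simp
    qed simp
  qed
  then obtain \<psi> where \<psi>: "\<forall>p. snd p < a (fst p) \<longrightarrow>
      is_hom G N (Q (fst p)) (\<psi> p) \<and> (\<forall>i. \<forall>v\<in>rsp M i. \<psi> p i (u i v) = \<phi> i v p)"
    by (rule choice[THEN exE])
  have \<psi>_hom: "is_hom G N (Q (fst p)) (\<psi> p)" if "snd p < a (fst p)" for p
    using conjunct1[OF \<psi>[rule_format, OF that]] .
  have \<psi>_ext: "\<psi> p i (u i v) = \<phi> i v p" if "snd p < a (fst p)" "v \<in> rsp M i" for p i v
    using conjunct2[OF \<psi>[rule_format, OF that(1)]] that(2) by blast
  have "(\<lambda>p. if snd p < a (fst p) then \<psi> p i (u i v) else 0) = \<phi> i v" if v: "v \<in> rsp M i" for i v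
  proof
    fix p
    show "(if snd p < a (fst p) then \<psi> p i (u i v) else 0) = \<phi> i v p"
      using \<psi>_ext[OF _ v] dsum_inval[OF is_hom_into[OF \<phi> v]] by (cases "snd p < a (fst p)") simp_all
  qed
  moreover have "is_hom G N E (\<lambda>k x p. if snd p < a (fst p) then \<psi> p k x else 0)"
    by (rule is_hom_dsum_of_components[OF \<psi>_hom])
  ultimately show "\<exists>\<psi>. is_hom G N E \<psi> \<and> (\<forall>i. \<forall>v\<in>rsp M i. \<psi> i (u i v) = \<phi> i v)"
    by (intro exI[of _ "\<lambda>k x p. if snd p < a (fst p) then \<psi> p k x else 0"]) simp
qed

end

context injective_hull_sum
begin

lemma dsum_socle_component:
  assumes x: "x \<in> socle G E k" and p: "snd p < a (fst p)"
  shows "x p \<in> socle G (Q (fst p)) k"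
proof -
  have xE: "x \<in> rsp E k" using x by (simp add: socle_def)
  have "rmap (Q (fst p)) h (x p) = 0" if "h \<in> garr G" "gsrc G h = k" for h
  proof -
    have "rmap E h x = 0" using x that by (simp add: socle_def)
    then have "rmap E h x p = 0" by simp
    then show ?thesis using p by (simp add: dsum_simps)
  qed
  then show ?thesis using dsum_val[OF xE p] by (simp add: socle_def)
qed

definition socle_basis :: "'i \<Rightarrow> nat \<Rightarrow> 'i \<times> nat \<Rightarrow> 'q" where
  "socle_basis k n = (\<lambda>p. if p = (k, n) then \<iota> k k 1 else 0)"

lemma dsum_socle_coordinates:
  assumes x: "x \<in> socle G E k"
  obtains cf where "\<And>i m. x (i, m) = (if i = k \<and> m < a k then \<iota> k k (cf m) else 0)"
proof -
  have xE: "x \<in> rsp E k" using x by (simp add: socle_def)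
  have comp: "x p = 0 \<or> (k = fst p \<and> (\<exists>c. x p = \<iota> k k c))" if "snd p < a (fst p)" for p
    using hull_socle[OF hull dsum_socle_component[OF x that]] by auto
  have "\<exists>c. x (k, n) = \<iota> k k c" for n
  proof (cases "n < a k")
    case True
    then have "x (k, n) = 0 \<or> (\<exists>c. x (k, n) = \<iota> k k c)" using comp[of "(k, n)"] by auto
    then show ?thesis using hull_embedding_zero[OF hull, of k k] by metis
  next
    case False
    then have "x (k, n) = 0" using dsum_inval[OF xE, of "(k, n)"] by simp
    then show ?thesis using hull_embedding_zero[OF hull, of k k] by metis
  qed
  define cf where "cf n = (SOME c. x (k, n) = \<iota> k k c)" for n
  have cf: "x (k, n) = \<iota> k k (cf n)" for n
    unfolding cf_def by (rule someI_ex) (rule \<open>\<exists>c. x (k, n) = \<iota> k k c\<close>)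
  have "x (i, m) = 0" if "\<not> (i = k \<and> m < a k)" for i m
  proof (cases "m < a i")
    case True
    then show ?thesis using comp[of "(i, m)"] that by auto
  next
    case False
    then show ?thesis using dsum_inval[OF xE, of "(i, m)"] by simp
  qed
  then have "x (i, m) = (if i = k \<and> m < a k then \<iota> k k (cf m) else 0)" for i m
    using cf by simp
  then show ?thesis by (rule that)
qed

lemma socle_dsum_span: "socle G E k \<subseteq> module.span (rsc E) (socle_basis k ` {..<a k})"
proof
  interpret VE: vector_space "rsc E" by (rule vector_space_dsum)
  fix x assume "x \<in> socle G E k"
  then obtain cf where cf: "\<And>i m. x (i, m) = (if i = k \<and> m < a k then \<iota> k k (cf m) else 0)"
    using dsum_socle_coordinates by blast
  have scale_one: "rsc (Q k) c (\<iota> k k 1) = \<iota> k k c" for c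
    using hull_embedding_scale[OF hull, of k c 1] by simp
  have basis: "rsc E c (socle_basis k n) (i, m) = (if i = k \<and> n = m then \<iota> k k c else 0)" for c n i m
    by (auto simp: socle_basis_def dsum_simps scale_one Q_scale_zero)
  have coord: "x (i, m) = (\<Sum>n\<in>{..<a k}. rsc E (cf n) (socle_basis k n)) (i, m)" for i m
    unfolding sum_fun_apply basis cf by (cases "i = k") (simp_all add: sum.delta)
  have eq: "x = (\<Sum>n\<in>{..<a k}. rsc E (cf n) (socle_basis k n))"
  proof (intro ext)
    fix p show "x p = (\<Sum>n\<in>{..<a k}. rsc E (cf n) (socle_basis k n)) p"
      using coord[of "fst p" "snd p"] by simp
  qed
  show "x \<in> VE.span (socle_basis k ` {..<a k})"
    unfolding eq by (intro VE.span_sum VE.span_scale VE.span_base) auto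
qed

lemma coordinate_kernel_submodule:
  assumes W: "is_submodule G E W"
  shows "is_submodule G E (\<lambda>k. {x \<in> W k. x p = 0})"
  unfolding is_submodule_def
proof (intro conjI allI ballI)
  interpret VE: vector_space "rsc E" by (rule vector_space_dsum)
  fix i
  have sub: "VE.subspace (W i)" by (rule is_submodule_subspace[OF W])
  show "VE.subspace {x \<in> W i. x p = 0}"
  proof (rule VE.subspaceI)
    show "0 \<in> {x \<in> W i. x p = 0}" using VE.subspace_0[OF sub] by simp
  next
    fix x y assume "x \<in> {x \<in> W i. x p = 0}" "y \<in> {x \<in> W i. x p = 0}"
    then show "x + y \<in> {x \<in> W i. x p = 0}" using VE.subspace_add[OF sub] by simp
  next
    fix c x assume "x \<in> {x \<in> W i. x p = 0}"
    then show "rsc E c x \<in> {x \<in> W i. x p = 0}" using VE.subspace_scale[OF sub] by (simp add: dsum_simps Q_scale_zero)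
  qed
  show "{x \<in> W i. x p = 0} \<subseteq> rsp E i" using is_submodule_subset[OF W] by blast
next
  fix h assume h: "h \<in> garr G"
  show "rmap E h ` {x \<in> W (gsrc G h). x p = 0} \<subseteq> {x \<in> W (gtgt G h). x p = 0}"
    using is_submodule_arrow_into[OF W h] is_module_arrow_zero[OF module_Q h] by (auto simp: dsum_simps)
qed

lemma coordinate_image_submodule:
  assumes W: "is_submodule G E W" and p: "snd p < a (fst p)"
  shows "is_submodule G (Q (fst p)) (\<lambda>k. (\<lambda>x. x p) ` W k)"
  unfolding is_submodule_def
proof (intro conjI allI ballI)
  fix i
  have "lin_on (rsc E) (rsc (Q (fst p))) (W i) (\<lambda>x. x p)" by (simp add: lin_on_def dsum_simps)
  then show "module.subspace (rsc (Q (fst p))) ((\<lambda>x. x p) ` W i)"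
    by (rule lin_on_subspace_image[OF vector_space_dsum
          is_module_vector_space[OF module_Q] is_submodule_subspace[OF W]])
  show "(\<lambda>x. x p) ` W i \<subseteq> rsp (Q (fst p)) i"
    using dsum_val[OF _ p] is_submodule_subset[OF W] by blast
next
  fix h assume h: "h \<in> garr G"
  have "rmap (Q (fst p)) h (u p) = rmap E h u p" for u using p by (simp add: dsum_simps)
  then show "rmap (Q (fst p)) h ` (\<lambda>x. x p) ` W (gsrc G h) \<subseteq> (\<lambda>x. x p) ` W (gtgt G h)"
    using is_submodule_arrow_into[OF W h] by auto
qed

text \<open>If no nonzero vector of \<open>W\<close> vanishes at \<open>p\<close>, the projection to the coordinate \<open>p\<close> is
  injective on \<open>W\<close>, so a vector of \<open>W\<close> projecting into the image of \<open>s\<^bsub>fst p\<^esub>\<close> is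
  annihilated by all arrows.\<close>

lemma socle_meets_coordinate:
  assumes W: "is_submodule G E W" and Wp: "\<And>k. {x \<in> W k. x p = 0} = {0}"
    and x0: "x0 \<in> W i" "x0 p \<noteq> 0"
  shows "\<exists>j. \<exists>u\<in>W j. u \<noteq> 0 \<and> u \<in> socle G E j"
proof -
  have p: "snd p < a (fst p)" using x0 dsum_inval is_submodule_subset[OF W] by blast
  have "(\<lambda>x. x p) ` W i \<noteq> {0}" using x0 by blast
  then obtain j w where w: "w \<in> (\<lambda>x. x p) ` W j" "w \<noteq> 0"
    "w \<in> \<iota> (fst p) j ` rsp (simple_mod (fst p) :: ('i,'h,complex) rep) j"
    using hull[of "fst p"] coordinate_image_submodule[OF W p] unfolding is_injective_hull_def by blast
  obtain u where u: "u \<in> W j" "u p = w" using w(1) by blast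
  obtain z where z: "z \<in> rsp (simple_mod (fst p) :: ('i,'h,complex) rep) j" "w = \<iota> (fst p) j z"
    using w(3) by blast
  have "rmap E h u = 0" if h: "h \<in> garr G" "gsrc G h = j" for h
  proof -
    have "rmap (Q (fst p)) h w = 0" using hull_embedding_in_socle[OF hull z(1)] z(2) h by (simp add: socle_def)
    then have "rmap E h u p = 0" using u(2) p by (simp add: dsum_simps)
    moreover have "rmap E h u \<in> W (gtgt G h)" using is_submodule_arrow_into[OF W h(1)] u(1) h(2) by blast
    ultimately show ?thesis using Wp by blast
  qed
  then have "u \<in> socle G E j" using u(1) is_submodule_subset[OF W] by (auto simp: socle_def)
  moreover have "u \<noteq> 0" using u(2) w(2) by auto
  ultimately show ?thesis using u(1) by blast
qed

lemma socle_meets_supported_submodule: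
  assumes "finite P"
  shows "is_submodule G E W \<Longrightarrow> (\<And>k x q. x \<in> W k \<Longrightarrow> q \<notin> P \<Longrightarrow> x q = 0) \<Longrightarrow> W i \<noteq> {0}
    \<Longrightarrow> \<exists>j. \<exists>u\<in>W j. u \<noteq> 0 \<and> u \<in> socle G E j"
  using assms
proof (induction P arbitrary: W i)
  case empty
  have "x = 0" if "x \<in> W i" for x using empty.prems(2)[OF that] by (simp add: fun_eq_iff)
  moreover have "0 \<in> W i" by (rule is_submodule_zero[OF is_module_dsum empty.prems(1)])
  ultimately show ?case using empty.prems(3) by blast
next
  case (insert p P)
  let ?Wp = "\<lambda>k. {x \<in> W k. x p = 0}"
  show ?case
  proof (cases "\<exists>k. ?Wp k \<noteq> {0}")
    case True
    then obtain k where k: "?Wp k \<noteq> {0}" by blast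
    have "x q = 0" if "x \<in> ?Wp k'" "q \<notin> P" for k' x q
      using that insert.prems(2)[of x k' q] by (cases "q = p") auto
    then obtain j u where "u \<in> ?Wp j" "u \<noteq> 0" "u \<in> socle G E j"
      using insert.IH[OF coordinate_kernel_submodule[OF insert.prems(1)] _ k] by blast
    then show ?thesis by blast
  next
    case False
    then have Wp: "?Wp k = {0}" for k by blast
    have "0 \<in> W i" by (rule is_submodule_zero[OF is_module_dsum insert.prems(1)])
    then obtain x0 where "x0 \<in> W i" "x0 \<noteq> 0" using insert.prems(3) by blast
    moreover have "x0 p \<noteq> 0" using calculation Wp[of i] by blast
    ultimately show ?thesis using socle_meets_coordinate[OF insert.prems(1) Wp] by blast
  qed
qed

lemma socle_essential_dsum: "socle_essential G E"
  unfolding socle_essential_def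
proof (intro allI impI)
  fix W assume W: "is_submodule G E W" and "\<exists>i. W i \<noteq> {0}"
  then obtain i where "W i \<noteq> {0}" by blast
  have fin: "finite {p :: 'i \<times> nat. snd p < a (fst p)}"
    by (rule finite_subset[of _ "SIGMA i:UNIV. {..<a i}"]) auto
  have "x q = 0" if "x \<in> W k" "q \<notin> {p. snd p < a (fst p)}" for k x q
    using dsum_inval[OF subsetD[OF is_submodule_subset[OF W] that(1)]] that(2) by simp
  then show "\<exists>i. \<exists>x\<in>W i. x \<noteq> 0 \<and> x \<in> socle G E i"
    by (rule socle_meets_supported_submodule[OF fin W _ \<open>W i \<noteq> {0}\<close>])
qed

end

theorem mainTheorem1:
  fixes G :: "('i::finite,'h) graph"
    and Q :: "'i \<Rightarrow> ('i,'h,'q::ab_group_add) rep"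
    and \<iota> :: "'i \<Rightarrow> 'i \<Rightarrow> complex \<Rightarrow> 'q"
    and a :: "'i \<Rightarrow> nat"
    and X :: "('i,'h,'x::ab_group_add) rep"
    and f1 f2 :: "'i \<Rightarrow> 'x \<Rightarrow> 'i \<times> nat \<Rightarrow> 'q"
  assumes "double_graph G"
    and "\<And>i. is_injective_hull G (simple_mod i) (Q i) (\<iota> i)"
    and "is_module G X"
    and "findim_module X"
    and "\<exists>u. is_mono G X (dsum_mod Q a) u"
    and "is_mono G X (dsum_mod Q a) f1"
    and "is_mono G X (dsum_mod Q a) f2"
  shows "\<exists>g. is_iso G (dsum_mod Q a) (dsum_mod Q a) g \<and>
             (\<forall>i. \<forall>v\<in>rsp X i. f2 i v = g i (f1 i v))"
proof -
  interpret injective_hull_sum G Q \<iota> a by (rule injective_hull_sum.intro[OF assms(2)])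
  have "\<exists>T. finite T \<and> socle G E k \<subseteq> module.span (rsc E) T" for k
    using socle_dsum_span by blast
  then show ?thesis
    by (rule monos_differ_by_automorphism[OF assms(1,3) is_module_dsum is_injective_dsum socle_essential_dsum _ assms(6,7)])
qed

end
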